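(* Consider the discrete setting described in the context, and assume that the number $N$ of spatial cells is odd. Let $\Delta t_{\max}>0$ be arbitrary. Then there exist constants $C\ge1$ and $\kappa>0$, independent of the discretization parameters (of $N$, $L$, $\Delta x$, $\Delta v$, and of $\Delta t\le\Delta t_{\max}$), such that for all $\Delta t\le\Delta t_{\max}$ and all initial data $F^0=(f^0_{ij},g^0_{ij})_{i\in\mathcal I,j\in\mathcal J}$ with $\sum_{i,j}\Delta x\,\Delta v\,(f^0_{ij}-g^0_{ij})=0$, the solution $F^n=(f^n_{ij},g^n_{ij})$ of the linearized scheme satisfies for all $n\ge0$ $$\|F^{n+1}\|_\Delta\le C\,\|F^0\|_\Delta\,e^{-\kappa t^n}.$$
   Context: Space mesh: the torus $\mathbb T$ is split into $N$ uniform cells of length $\Delta x$, indexed by $i\in\mathcal I=\mathbb Z/N\mathbb Z$ (periodic). Velocity mesh: $v^*>0$, integer $L\ge1$, $\Delta v=v^*/L$, cells $j\in\mathcal J=\{-L+1,\dots,L\}$ with midpoints $v_j=(j-\tfrac12)\Delta v$. Time step $\Delta t>0$, $t^n=n\Delta t$; $\lambda=\Delta x/(2\Delta t)$ is a fixed positive constant. Fixed $\rho_\infty^*>0$. For $k=1,2$: $\chi_{k,j}>0$, $\chi_{k,j}=\chi_{k,1-j}$, $\sum_j\Delta v\chi_{k,j}=1$, $0<\underline D_k\le\sum_j\Delta v\,v_j^2\chi_{k,j}\le\overline D_k$, $\sum_j\Delta v\,v_j^4\chi_{k,j}\le\overline Q_k$, where $\underline D_k,\overline D_k,\overline Q_k$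 are constants independent of the discretization. Densities $\rho_{f,i}=\sum_j\Delta vf_{ij}$, $\rho_{g,i}=\sum_j\Delta vg_{ij}$. Linearized scheme ($n\ge0$): $\frac{f^{n+1}_{ij}-f^n_{ij}}{\Delta t}+\frac{1}{\Delta x\Delta v}(\mathcal F^{n+1}_{i+\frac12,j}-\mathcal F^{n+1}_{i-\frac12,j})=-\rho_\infty^*\chi_{1,j}\rho^{n+1}_{g,i}-(\rho_\infty^* )^{-1}f^{n+1}_{ij}$, $\frac{g^{n+1}_{ij}-g^n_{ij}}{\Delta t}+\frac{1}{\Delta x\Delta v}(\mathcal G^{n+1}_{i+\frac12,j}-\mathcal G^{n+1}_{i-\frac12,j})=-(\rho_\infty^* )^{-1}\chi_{2,j}\rho^{n+1}_{f,i}-\rho_\infty^*g^{n+1}_{ij}$, with Lax–Friedrichs fluxes $\mathcal F^{n+1}_{i+\frac12,j}=\Delta v\frac{v_j}{2}(f^{n+1}_{i+1,j}+f^{n+1}_{ij})-\Delta v\lambda(f^{n+1}_{i+1,j}-f^{n+1}_{ij})$ and $\mathcal G$ likewise with $g$. Norm: $\|F\|_\Delta^2=\sum_{i,j}\Delta x\Delta v\big(\frac{f_{ij}^2}{\chi_{1,j}\rho_\infty^*}+\frac{g_{ij}^2\rho_\infty^*}{\chi_{2,j}}\big)$. *)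

theory Defs
  imports Complex_Main
begin

definition Jset :: "nat \<Rightarrow> int set" where
  "Jset L = {1 - int L .. int L}"

definition vel :: "real \<Rightarrow> int \<Rightarrow> real" where
  "vel dv j = (real_of_int j - 1/2) * dv"

text \<open>Periodic neighbours on I = Z/NZ, represented by {0..<N}.\<close>
definition nxt :: "nat \<Rightarrow> nat \<Rightarrow> nat" where
  "nxt N i = (i + 1) mod N"
definition prv :: "nat \<Rightarrow> nat \<Rightarrow> nat" where
  "prv N i = (i + N - 1) mod N"

text \<open>Lax--Friedrichs flux at interface i+1/2, with a = value in cell i and
  b = value in cell i+1.\<close>
definition LF_flux :: "real \<Rightarrow> real \<Rightarrow> real \<Rightarrow> real \<Rightarrow> real \<Rightarrow> real" where
  "LF_flux dv lam v a b = dv * (v / 2) * (b + a) - dv * lam * (b - a)"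

definition dens :: "nat \<Rightarrow> real \<Rightarrow> (nat \<Rightarrow> int \<Rightarrow> real) \<Rightarrow> nat \<Rightarrow> real" where
  "dens L dv h i = (\<Sum>j\<in>Jset L. dv * h i j)"

definition chi_ok :: "nat \<Rightarrow> real \<Rightarrow> real \<Rightarrow> real \<Rightarrow> real \<Rightarrow> (int \<Rightarrow> real) \<Rightarrow> bool" where
  "chi_ok L dv Dlo Dhi Q chi \<longleftrightarrow>
     (\<forall>j\<in>Jset L. chi j > 0 \<and> chi j = chi (1 - j)) \<and>
     (\<Sum>j\<in>Jset L. dv * chi j) = 1 \<and>
     Dlo \<le> (\<Sum>j\<in>Jset L. dv * (vel dv j)^2 * chi j) \<and>
     (\<Sum>j\<in>Jset L. dv * (vel dv j)^2 * chi j) \<le> Dhi \<and>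
     (\<Sum>j\<in>Jset L. dv * (vel dv j)^4 * chi j) \<le> Q"

definition scheme ::
  "nat \<Rightarrow> nat \<Rightarrow> real \<Rightarrow> real \<Rightarrow> real \<Rightarrow> real \<Rightarrow> real \<Rightarrow> (int \<Rightarrow> real) \<Rightarrow> (int \<Rightarrow> real)
   \<Rightarrow> (nat \<Rightarrow> nat \<Rightarrow> int \<Rightarrow> real) \<Rightarrow> (nat \<Rightarrow> nat \<Rightarrow> int \<Rightarrow> real) \<Rightarrow> bool" where
  "scheme N L dx dv dt lam rho chi1 chi2 f g \<longleftrightarrow>
     (\<forall>n. \<forall>i<N. \<forall>j\<in>Jset L.
        (f (Suc n) i j - f n i j) / dt
          + (LF_flux dv lam (vel dv j) (f (Suc n) i j) (f (Suc n) (nxt N i) j)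
             - LF_flux dv lam (vel dv j) (f (Suc n) (prv N i) j) (f (Suc n) i j)) / (dx * dv)
        = - rho * chi1 j * dens L dv (g (Suc n)) i - (1 / rho) * f (Suc n) i j
      \<and>
        (g (Suc n) i j - g n i j) / dt
          + (LF_flux dv lam (vel dv j) (g (Suc n) i j) (g (Suc n) (nxt N i) j)
             - LF_flux dv lam (vel dv j) (g (Suc n) (prv N i) j) (g (Suc n) i j)) / (dx * dv)
        = - (1 / rho) * chi2 j * dens L dv (f (Suc n)) i - rho * g (Suc n) i j)"

definition normD ::
  "nat \<Rightarrow> nat \<Rightarrow> real \<Rightarrow> real \<Rightarrow> real \<Rightarrow> (int \<Rightarrow> real) \<Rightarrow> (int \<Rightarrow> real)
   \<Rightarrow> (nat \<Rightarrow> int \<Rightarrow> real) \<Rightarrow> (nat \<Rightarrow> int \<Rightarrow> real) \<Rightarrow> real" where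
  "normD N L dx dv rho chi1 chi2 f g =
     sqrt (\<Sum>i<N. \<Sum>j\<in>Jset L. dx * dv *
        ((f i j)^2 / (chi1 j * rho) + (g i j)^2 * rho / chi2 j))"

end

theory Submission
  imports Defs "HOL-Analysis.Convex"
begin

text \<open>
  One step of the scheme reads F^n = F^(n+1) + dt B F^(n+1). The energy identity
  <F, B F> = D(F) + (lam/dx) |forward differences of F|^2 shows that the collisions dissipate
  the microscopic parts and the combination rho_f/rho + rho rho_g, but not the density gap
  m = rho_f - rho_g, whose mean is conserved. As in the hypocoercivity method the energy is
  corrected to H(F) = |F|^2 - 2 eps sum Y psi, where Y is the flux gap and psi a primitive of
  m - mean m for the centred difference. Because N is odd this primitive exists, is unique
  with zero mean, and obeys a Poincare inequality whose constant is the length of the torus.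
  The transport of m by Y then supplies the missing dissipation of m: for small eps, H is
  equivalent to |F|^2 and its bilinear form satisfies H(F, B F) >= kappa H(F), whence
  H(F^n) >= (1 + 2 dt kappa) H(F^(n+1)). All constants depend only on rho, the length of the
  torus, v* and the lower bounds of the second moments of the weights.
\<close>

section \<open>Difference operators on the periodic grid\<close>

type_synonym phase = "nat \<Rightarrow> int \<Rightarrow> real"

lemma nxt_less: "0 < N \<Longrightarrow> nxt N i < N"
  by (simp add: nxt_def)

lemma prv_less: "0 < N \<Longrightarrow> prv N i < N"
  by (simp add: prv_def)

lemma prv_nxt: "i < N \<Longrightarrow> prv N (nxt N i) = i"
  by (cases "i + 1 = N") (simp_all add: nxt_def prv_def)

lemma nxt_prv: "i < N \<Longrightarrow> nxt N (prv N i) = i"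
  by (cases i) (simp_all add: nxt_def prv_def mod_Suc_eq)

lemma sum_nxt_shift: "(\<Sum>i<N. \<phi> (nxt N i)) = (\<Sum>i<N. \<phi> i :: 'a::comm_monoid_add)"
  by (rule sum.reindex_bij_witness[where i="prv N" and j="nxt N"])
     (auto simp: prv_nxt nxt_prv nxt_less prv_less)

lemma sum_prv_shift: "(\<Sum>i<N. \<phi> (prv N i)) = (\<Sum>i<N. \<phi> i :: 'a::comm_monoid_add)"
  by (rule sum.reindex_bij_witness[where i="nxt N" and j="prv N"])
     (auto simp: prv_nxt nxt_prv nxt_less prv_less)

definition cdiff :: "nat \<Rightarrow> (nat \<Rightarrow> real) \<Rightarrow> nat \<Rightarrow> real" where
  "cdiff N \<psi> i = \<psi> (nxt N i) - \<psi> (prv N i)"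

text \<open>\<open>fdiff\<close> is also applied to arrays of type \<open>phase\<close>, where the difference is taken
  pointwise in the velocity index.\<close>

definition fdiff :: "nat \<Rightarrow> (nat \<Rightarrow> 'a::minus) \<Rightarrow> nat \<Rightarrow> 'a" where
  "fdiff N \<psi> i = \<psi> (nxt N i) - \<psi> i"

definition lap :: "nat \<Rightarrow> (nat \<Rightarrow> real) \<Rightarrow> nat \<Rightarrow> real" where
  "lap N \<psi> i = \<psi> (nxt N i) - 2 * \<psi> i + \<psi> (prv N i)"

definition mean :: "nat \<Rightarrow> (nat \<Rightarrow> real) \<Rightarrow> real" where
  "mean N u = (\<Sum>i<N. u i) / real N"

lemma sum_cdiff: "(\<Sum>i<N. cdiff N u i) = 0"
  by (simp add: cdiff_def sum_subtractf sum_nxt_shift sum_prv_shift)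

lemma sum_fdiff: "(\<Sum>i<N. fdiff N u i) = (0::real)"
  by (simp add: fdiff_def sum_subtractf sum_nxt_shift)

lemma sum_lap: "(\<Sum>i<N. lap N u i) = 0"
  by (simp add: lap_def sum.distrib sum_subtractf sum_nxt_shift sum_prv_shift
      flip: sum_distrib_left)

lemma sum_mult_cdiff: "(\<Sum>i<N. a i * cdiff N b i) = - (\<Sum>i<N. cdiff N a i * b i)"
proof -
  have "(\<Sum>i<N. a i * b (nxt N i)) = (\<Sum>i<N. a (prv N (nxt N i)) * b (nxt N i))"
    by (intro sum.cong) (auto simp: prv_nxt)
  also have "\<dots> = (\<Sum>i<N. a (prv N i) * b i)"
    by (rule sum_nxt_shift[where \<phi> = "\<lambda>i. a (prv N i) * b i"])
  finally have 1: "(\<Sum>i<N. a i * b (nxt N i)) = (\<Sum>i<N. a (prv N i) * b i)" .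
  have "(\<Sum>i<N. a i * b (prv N i)) = (\<Sum>i<N. a (nxt N (prv N i)) * b (prv N i))"
    by (intro sum.cong) (auto simp: nxt_prv)
  also have "\<dots> = (\<Sum>i<N. a (nxt N i) * b i)"
    by (rule sum_prv_shift[where \<phi> = "\<lambda>i. a (nxt N i) * b i"])
  finally have 2: "(\<Sum>i<N. a i * b (prv N i)) = (\<Sum>i<N. a (nxt N i) * b i)" .
  show ?thesis
    using 1 2 by (simp add: cdiff_def algebra_simps sum_subtractf)
qed

lemma sum_mult_lap: "(\<Sum>i<N. a i * lap N b i) = - (\<Sum>i<N. fdiff N a i * fdiff N b i)"
proof -
  have "(\<Sum>i<N. a i * b (prv N i)) = (\<Sum>i<N. a (nxt N (prv N i)) * b (prv N i))"
    by (intro sum.cong) (auto simp: nxt_prv)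
  also have "\<dots> = (\<Sum>i<N. a (nxt N i) * b i)"
    by (rule sum_prv_shift[where \<phi> = "\<lambda>i. a (nxt N i) * b i"])
  finally have 1: "(\<Sum>i<N. a i * b (prv N i)) = (\<Sum>i<N. a (nxt N i) * b i)" .
  have 2: "(\<Sum>i<N. a (nxt N i) * b (nxt N i)) = (\<Sum>i<N. a i * b i)"
    by (rule sum_nxt_shift[where \<phi> = "\<lambda>i. a i * b i"])
  show ?thesis
    using 1 2 by (simp add: lap_def fdiff_def algebra_simps sum_subtractf sum.distrib
        sum_distrib_left)
qed

lemma sum_mult_cdiff_self: "(\<Sum>i<N. a i * cdiff N a i) = 0"
  using sum_mult_cdiff[of a N a] by (simp add: mult.commute)

lemma sum_mult_lap_self: "(\<Sum>i<N. a i * lap N a i) = - (\<Sum>i<N. (fdiff N a i)\<^sup>2)"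
  using sum_mult_lap[of a N a] by (simp add: power2_eq_square)

lemma cdiff_fdiff: "i < N \<Longrightarrow> cdiff N (fdiff N \<psi>) i = fdiff N (cdiff N \<psi>) i"
  by (simp add: cdiff_def fdiff_def prv_nxt nxt_prv)

lemma cdiff_lap: "i < N \<Longrightarrow> cdiff N (lap N \<psi>) i = lap N (cdiff N \<psi>) i"
  by (simp add: cdiff_def lap_def prv_nxt nxt_prv)

lemma mean_lin: "mean N (\<lambda>i. u i + t * w i) = mean N u + t * mean N w"
  by (simp add: mean_def sum.distrib sum_distrib_left add_divide_distrib)

lemma mean_cong: "(\<And>i. i < N \<Longrightarrow> u i = w i) \<Longrightarrow> mean N u = mean N w"
  by (simp add: mean_def)

lemma sum_sq_deviation_le: "(\<Sum>i<N. (u i - mean N u)\<^sup>2) \<le> (\<Sum>i<N. (u i)\<^sup>2)"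
proof (cases "N = 0")
  case False
  have "(\<Sum>i<N. (u i - mean N u)\<^sup>2)
      = (\<Sum>i<N. (u i)\<^sup>2) - 2 * mean N u * (\<Sum>i<N. u i) + real N * (mean N u)\<^sup>2"
    by (simp add: power2_diff sum.distrib sum_subtractf sum_distrib_left mult_ac)
  also have "(\<Sum>i<N. u i) = real N * mean N u"
    using False by (simp add: mean_def)
  finally show ?thesis
    by (simp add: power2_eq_square)
qed simp

lemma weighted_Cauchy_Schwarz:
  fixes c a b p :: "'a \<Rightarrow> real"
  assumes c: "\<And>x. x \<in> A \<Longrightarrow> 0 \<le> c x" and p: "\<And>x. x \<in> A \<Longrightarrow> 0 < p x"
  shows "(\<Sum>x\<in>A. c x * a x * b x)\<^sup>2
    \<le> (\<Sum>x\<in>A. c x * (a x)\<^sup>2 * p x) * (\<Sum>x\<in>A. c x * (b x)\<^sup>2 / p x)"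
proof -
  have "(\<Sum>x\<in>A. c x * a x * b x) = (\<Sum>x\<in>A. (sqrt (c x * p x) * a x) * (sqrt (c x / p x) * b x))"
  proof (rule sum.cong)
    fix x assume x: "x \<in> A"
    have "sqrt (c x * p x) * sqrt (c x / p x) = sqrt (c x * c x)"
      using p[OF x] by (simp add: real_sqrt_mult[symmetric])
    also have "\<dots> = c x"
      using c[OF x] by simp
    finally show "c x * a x * b x = (sqrt (c x * p x) * a x) * (sqrt (c x / p x) * b x)"
      by (metis mult.commute mult.left_commute)
  qed simp
  also have "(\<dots>)\<^sup>2 \<le> (\<Sum>x\<in>A. (sqrt (c x * p x) * a x)\<^sup>2) * (\<Sum>x\<in>A. (sqrt (c x / p x) * b x)\<^sup>2)"
    by (rule Cauchy_Schwarz_ineq_sum)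
  also have "\<dots> = (\<Sum>x\<in>A. c x * (a x)\<^sup>2 * p x) * (\<Sum>x\<in>A. c x * (b x)\<^sup>2 / p x)"
    using c p by (intro arg_cong2[where f="(*)"] sum.cong)
      (auto simp: power_mult_distrib less_imp_le)
  finally show ?thesis .
qed

lemma sum_sq_le_card_mult: "(\<Sum>x\<in>A. d x)\<^sup>2 \<le> real (card A) * (\<Sum>x\<in>A. (d x :: real)\<^sup>2)"
  using Cauchy_Schwarz_ineq_sum[of "\<lambda>_. 1" d A] by simp

lemma sq_diff_le: "((a::real) - b)\<^sup>2 \<le> 2 * a\<^sup>2 + 2 * b\<^sup>2"
  using sum_squares_bound[of "-a" b] by (simp add: power2_diff)

lemma abs_two_mult_le: "\<bar>2 * (a::real) * b\<bar> \<le> a\<^sup>2 + b\<^sup>2"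
  using sum_squares_bound[of a b] sum_squares_bound[of "-a" b] by (simp add: abs_if)

text \<open>Young's inequality on the three cross terms of the modified dissipation; the weights
  are chosen so that the term in \<open>p\<^sup>2\<close> is absorbed later by the Poincare bound
  \<open>p\<^sup>2 \<le> 4 l\<^sup>2 m\<^sup>2\<close>.\<close>

lemma cell_coercivity:
  fixes Dc Y J P m W p M s e G c0 l :: real
  assumes e: "0 \<le> e" and l: "0 < l" and Dc: "c0 * M + s\<^sup>2 \<le> Dc"
    and Y: "Y\<^sup>2 \<le> G * M" and P: "(P - m)\<^sup>2 \<le> G * M" and W: "W\<^sup>2 \<le> G * M"
  shows "(c0 - e * G * (3 / 2 + 4 * l\<^sup>2)) * M + s\<^sup>2 + 3 / 4 * e * m\<^sup>2 - e / 2 * J\<^sup>2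
      - e / (16 * l\<^sup>2) * p\<^sup>2
    \<le> Dc - e * (Y * J) + e * (P * m) - e * (W * p)"
proof -
  have "Y * J \<le> G * M / 2 + J\<^sup>2 / 2"
    using sum_squares_bound[of Y J] Y by (simp add: mult.assoc)
  moreover have "3 / 4 * m\<^sup>2 - G * M \<le> P * m"
  proof -
    have "0 \<le> (P - m + m / 2)\<^sup>2"
      by simp
    then show ?thesis
      using P by (simp add: power2_eq_square algebra_simps)
  qed
  moreover have "W * p \<le> 4 * l\<^sup>2 * (G * M) + p\<^sup>2 / (16 * l\<^sup>2)"
  proof -
    have "(2 * l * W - p / (4 * l))\<^sup>2 = 4 * l\<^sup>2 * W\<^sup>2 - W * p + p\<^sup>2 / (16 * l\<^sup>2)"
      using l by (simp add: power2_eq_square field_simps)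
    moreover have "4 * l\<^sup>2 * W\<^sup>2 \<le> 4 * l\<^sup>2 * (G * M)"
      using W by (intro mult_left_mono) auto
    ultimately show ?thesis
      using zero_le_power2[of "2 * l * W - p / (4 * l)"] by linarith
  qed
  ultimately have "e * (Y * J) \<le> e * (G * M / 2 + J\<^sup>2 / 2)"
    and "e * (3 / 4 * m\<^sup>2 - G * M) \<le> e * (P * m)"
    and "e * (W * p) \<le> e * (4 * l\<^sup>2 * (G * M) + p\<^sup>2 / (16 * l\<^sup>2))"
    using e by (auto intro: mult_left_mono)
  moreover have "c0 * M + s\<^sup>2 - e * (G * M / 2 + J\<^sup>2 / 2) + e * (3 / 4 * m\<^sup>2 - G * M)
      - e * (4 * l\<^sup>2 * (G * M) + p\<^sup>2 / (16 * l\<^sup>2))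
    = (c0 - e * G * (3 / 2 + 4 * l\<^sup>2)) * M + s\<^sup>2 + 3 / 4 * e * m\<^sup>2 - e / 2 * J\<^sup>2
      - e / (16 * l\<^sup>2) * p\<^sup>2"
    by (simp add: algebra_simps add_divide_distrib diff_divide_distrib)
  ultimately show ?thesis
    using Dc by linarith
qed

lemma inverse_le_exp:
  fixes k dt dtmax :: real
  assumes k: "0 < k" and dt: "0 < dt" "dt \<le> dtmax"
  shows "1 / (1 + 2 * dt * k) \<le> exp (- (2 * (k / (1 + 2 * dtmax * k)) * dt))"
proof -
  define \<kappa> where "\<kappa> = k / (1 + 2 * dtmax * k)"
  have "0 < 1 + 2 * dtmax * k"
    using k dt by (simp add: add_pos_pos)
  then have "0 < \<kappa>" and "\<kappa> * (1 + 2 * dt * k) \<le> k"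
    using k dt by (auto simp: \<kappa>_def divide_le_eq intro!: mult_left_mono)
  moreover have "(1 - 2 * \<kappa> * dt) * (1 + 2 * dt * k) = 1 + 2 * dt * (k - \<kappa> * (1 + 2 * dt * k))"
    by (simp add: algebra_simps)
  ultimately have "1 \<le> (1 - 2 * \<kappa> * dt) * (1 + 2 * dt * k)"
    using dt by simp
  then have "1 / (1 + 2 * dt * k) \<le> 1 - 2 * \<kappa> * dt"
    using k dt by (simp add: divide_le_eq add_pos_pos mult.commute)
  also have "\<dots> \<le> exp (- (2 * \<kappa> * dt))"
    using exp_ge_add_one_self[of "- (2 * \<kappa> * dt)"] by simp
  finally show ?thesis
    by (simp add: \<kappa>_def)
qed

section \<open>Central differences on a grid with an odd number of cells\<close>

lemma inj_on_double_mod: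
  fixes N r :: nat
  assumes "odd N"
  shows "inj_on (\<lambda>k. (2 * k + r) mod N) {..<N}"
proof -
  have same: "a = b" if "a \<le> b" "b < N" "(2 * b + r) mod N = (2 * a + r) mod N" for a b
  proof -
    have "N dvd (2 * b + r) - (2 * a + r)"
      using that mod_eq_dvd_iff_nat[of "2 * a + r" "2 * b + r" N] by simp
    then have "N dvd 2 * (b - a)"
      by (simp add: diff_mult_distrib2)
    moreover have "coprime N 2"
      using assms by simp
    ultimately have "N dvd b - a"
      using coprime_dvd_mult_right_iff by blast
    moreover have "b - a < N"
      using that by simp
    ultimately show "a = b"
      using that(1) nat_dvd_not_less[of "b - a" N] by linarith
  qed
  show ?thesis
    by (rule inj_onI) (metis lessThan_iff nat_le_linear same)
qed

lemma double_mod_image: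
  fixes N r :: nat
  assumes "odd N"
  shows "(\<lambda>k. (2 * k + r) mod N) ` {..<N} = {..<N}"
proof (rule endo_inj_surj)
  show "(\<lambda>k. (2 * k + r) mod N) ` {..<N} \<subseteq> {..<N}"
    using assms by (cases N) auto
qed (use inj_on_double_mod[OF assms] in auto)

lemma sum_double_mod_reindex:
  fixes N r :: nat
  assumes "odd N"
  shows "(\<Sum>k<N. \<phi> ((2 * k + r) mod N)) = (\<Sum>i<N. \<phi> i :: real)"
  using sum.reindex[OF inj_on_double_mod[OF assms], of \<phi>] double_mod_image[OF assms]
  by (simp add: comp_def)

lemma nxt_double_mod: "0 < N \<Longrightarrow> nxt N ((2 * l + 1) mod N) = (2 * Suc l) mod N"
  by (simp add: nxt_def mod_Suc_eq)

lemma prv_double_mod: "0 < N \<Longrightarrow> prv N ((2 * l + 1) mod N) = (2 * l) mod N"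
proof -
  assume "0 < N"
  then have "(2 * l + 1) mod N + N - 1 = (2 * l + 1) mod N + (N - 1)"
    by simp
  then have "prv N ((2 * l + 1) mod N) = (2 * l + 1 + (N - 1)) mod N"
    by (simp add: prv_def mod_add_left_eq)
  also have "2 * l + 1 + (N - 1) = 2 * l + N"
    using \<open>0 < N\<close> by simp
  finally show ?thesis
    by simp
qed

lemma sum_sq_le_increments:
  fixes w :: "nat \<Rightarrow> real"
  assumes "(\<Sum>k<N. w k) = 0"
  shows "(\<Sum>k<N. (w k)\<^sup>2) \<le> real N ^ 2 * (\<Sum>l<N. (w (Suc l) - w l)\<^sup>2)"
proof -
  define D where "D = (\<Sum>l<N. (w (Suc l) - w l)\<^sup>2)"
  have increments: "(w k - w 0)\<^sup>2 \<le> real N * D" if "k < N" for k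
  proof -
    have "(w k - w 0)\<^sup>2 = (\<Sum>l<k. w (Suc l) - w l)\<^sup>2"
      by (simp add: sum_lessThan_telescope)
    also have "\<dots> \<le> real k * (\<Sum>l<k. (w (Suc l) - w l)\<^sup>2)"
      using sum_sq_le_card_mult[of "\<lambda>l. w (Suc l) - w l" "{..<k}"] by simp
    also have "\<dots> \<le> real N * D"
      unfolding D_def using that by (intro mult_mono sum_mono2) (auto simp: sum_nonneg)
    finally show ?thesis .
  qed
  have "(\<Sum>k<N. (w k - w 0)\<^sup>2) = (\<Sum>k<N. (w k)\<^sup>2) - 2 * w 0 * (\<Sum>k<N. w k) + real N * (w 0)\<^sup>2"
    by (simp add: power2_diff sum.distrib sum_subtractf sum_distrib_left mult_ac)
  then have "(\<Sum>k<N. (w k)\<^sup>2) \<le> (\<Sum>k<N. (w k - w 0)\<^sup>2)"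
    using assms by simp
  also have "\<dots> \<le> (\<Sum>k<N. real N * D)"
    using increments by (intro sum_mono) auto
  finally show ?thesis
    by (simp add: D_def power2_eq_square mult.assoc)
qed

text \<open>For odd \<open>N\<close> the map \<open>k \<mapsto> 2k mod N\<close> runs once through the torus, and along this
  reordering the central difference becomes a forward difference:
  \<open>cdiff N \<psi> ((2l+1) mod N) = w (l+1) - w l\<close> for \<open>w k = \<psi> (2k mod N)\<close>. The discrete
  Poincare inequality and the solvability of \<open>cdiff N \<psi> = u\<close> are then those of a forward
  difference on a closed chain.\<close>

lemma cdiff_double_mod:
  assumes "0 < N"
  shows "cdiff N \<psi> ((2 * l + 1) mod N) = \<psi> ((2 * Suc l) mod N) - \<psi> ((2 * l) mod N)"
  unfolding cdiff_def nxt_double_mod[OF assms] prv_double_mod[OF assms] ..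

lemma cdiff_poincare:
  assumes N: "odd N" and mean_zero: "(\<Sum>i<N. \<psi> i) = 0"
  shows "(\<Sum>i<N. (\<psi> i)\<^sup>2) \<le> real N ^ 2 * (\<Sum>i<N. (cdiff N \<psi> i)\<^sup>2)"
proof -
  have "0 < N"
    using N by (cases N) auto
  define w where "w k = \<psi> ((2 * k) mod N)" for k
  have reindex: "(\<Sum>k<N. \<phi> ((2 * k + r) mod N)) = (\<Sum>i<N. \<phi> i)"
    for \<phi> :: "nat \<Rightarrow> real" and r :: nat
    by (rule sum_double_mod_reindex[OF N])
  have w_mean_zero: "(\<Sum>k<N. w k) = 0"
    using reindex[of \<psi> 0] mean_zero by (simp add: w_def)
  have "(\<Sum>i<N. (\<psi> i)\<^sup>2) = (\<Sum>k<N. (w k)\<^sup>2)"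
    using reindex[of "\<lambda>i. (\<psi> i)\<^sup>2" 0] by (simp add: w_def)
  also have "\<dots> \<le> real N ^ 2 * (\<Sum>l<N. (w (Suc l) - w l)\<^sup>2)"
    using w_mean_zero by (rule sum_sq_le_increments)
  also have "(\<Sum>l<N. (w (Suc l) - w l)\<^sup>2) = (\<Sum>l<N. (cdiff N \<psi> ((2 * l + 1) mod N))\<^sup>2)"
    by (simp only: w_def cdiff_double_mod[OF \<open>0 < N\<close>])
  also have "\<dots> = (\<Sum>i<N. (cdiff N \<psi> i)\<^sup>2)"
    by (rule reindex)
  finally show ?thesis .
qed

lemma cdiff_solvable:
  assumes N: "odd N" and mean_zero: "(\<Sum>i<N. u i) = 0"
  shows "\<exists>\<psi>. (\<forall>i<N. cdiff N \<psi> i = u i) \<and> (\<Sum>i<N. \<psi> i) = 0"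
proof -
  have "0 < N"
    using N by (cases N) auto
  define \<phi> where "\<phi> k = (\<Sum>l<k. u ((2 * l + 1) mod N))" for k
  have inj: "inj_on (\<lambda>k. (2 * k) mod N) {..<N}"
    using inj_on_double_mod[OF N, of 0] by simp
  define \<psi>0 where "\<psi>0 = (\<lambda>i. \<phi> (the_inv_into {..<N} (\<lambda>k. (2 * k) mod N) i))"
  have \<psi>0: "\<psi>0 ((2 * k) mod N) = \<phi> k" if "k < N" for k
    unfolding \<psi>0_def using the_inv_into_f_f[OF inj] that by simp
  have \<phi>N: "\<phi> N = 0"
    using sum_double_mod_reindex[OF N, of u 1] mean_zero by (simp add: \<phi>_def)
  have "cdiff N \<psi>0 i = u i" if "i < N" for i
  proof -
    have "i \<in> (\<lambda>k. (2 * k + 1) mod N) ` {..<N}"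
      using double_mod_image[OF N, of 1] \<open>i < N\<close> by simp
    then obtain l where l: "l < N" and i: "i = (2 * l + 1) mod N"
      by auto
    have "\<psi>0 ((2 * Suc l) mod N) = \<phi> (Suc l)"
    proof (cases "Suc l < N")
      case False
      then have "Suc l = N"
        using l by simp
      then show ?thesis
        using \<psi>0[OF \<open>0 < N\<close>] \<phi>N by (simp add: \<phi>_def)
    qed (rule \<psi>0)
    then show ?thesis
      unfolding i cdiff_double_mod[OF \<open>0 < N\<close>] using \<psi>0[OF l] by (simp add: \<phi>_def)
  qed
  then have "\<forall>i<N. cdiff N (\<lambda>i. \<psi>0 i - c) i = u i" for c
    by (simp add: cdiff_def)
  moreover have "(\<Sum>i<N. \<psi>0 i - (\<Sum>i<N. \<psi>0 i) / real N) = 0"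
    using \<open>0 < N\<close> by (simp add: sum_subtractf)
  ultimately show ?thesis
    by blast
qed

lemma cdiff_unique:
  assumes N: "odd N" and eq: "\<And>i. i < N \<Longrightarrow> cdiff N \<psi>1 i = cdiff N \<psi>2 i"
    and mean1: "(\<Sum>i<N. \<psi>1 i) = 0" and mean2: "(\<Sum>i<N. \<psi>2 i) = 0" and i: "i < N"
  shows "\<psi>1 i = \<psi>2 i"
proof -
  define d where "d k = \<psi>1 k - \<psi>2 k" for k
  have "(\<Sum>k<N. d k) = 0"
    using mean1 mean2 by (simp add: d_def sum_subtractf)
  then have "(\<Sum>k<N. (d k)\<^sup>2) \<le> real N ^ 2 * (\<Sum>k<N. (cdiff N d k)\<^sup>2)"
    by (rule cdiff_poincare[OF N])
  also have "(\<Sum>k<N. (cdiff N d k)\<^sup>2) = 0"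
    using eq by (simp add: d_def cdiff_def algebra_simps)
  finally have "(\<Sum>k<N. (d k)\<^sup>2) = 0"
    by (simp add: antisym sum_nonneg)
  then show ?thesis
    using i by (simp add: d_def sum_nonneg_eq_0_iff)
qed

section \<open>Velocity moments\<close>

locale velocity_grid =
  fixes L :: nat and vstar dv :: real
  assumes L_pos: "1 \<le> L" and vstar_pos: "0 < vstar" and dv_eq: "dv = vstar / real L"
begin

abbreviation J :: "int set" where "J \<equiv> Jset L"
abbreviation v :: "int \<Rightarrow> real" where "v \<equiv> vel dv"

definition mom :: "(int \<Rightarrow> real) \<Rightarrow> (int \<Rightarrow> real) \<Rightarrow> real" where
  "mom w h = (\<Sum>j\<in>J. dv * w j * h j)"

abbreviation mom0 :: "(int \<Rightarrow> real) \<Rightarrow> real" where "mom0 \<equiv> mom (\<lambda>_. 1)"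
abbreviation mom1 :: "(int \<Rightarrow> real) \<Rightarrow> real" where "mom1 \<equiv> mom v"
abbreviation mom2 :: "(int \<Rightarrow> real) \<Rightarrow> real" where "mom2 \<equiv> mom (\<lambda>j. (v j)\<^sup>2)"

lemma finite_J [simp]: "finite J"
  by (simp add: Jset_def)

lemma dv_pos: "0 < dv"
  using vstar_pos L_pos by (simp add: dv_eq)

lemma vel_sq_le: "j \<in> J \<Longrightarrow> (v j)\<^sup>2 \<le> vstar\<^sup>2"
proof -
  assume "j \<in> J"
  then have "\<bar>real_of_int j - 1/2\<bar> \<le> real L"
    using L_pos by (auto simp: Jset_def abs_if)
  then have "\<bar>v j\<bar> \<le> real L * dv"
    using dv_pos by (simp add: vel_def abs_mult mult_right_mono)
  also have "real L * dv = vstar"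
    using L_pos by (simp add: dv_eq)
  finally show ?thesis
    by (metis abs_ge_zero power2_abs power_mono)
qed

lemma mom_lin: "mom w (\<lambda>j. a j + t * b j) = mom w a + t * mom w b"
  by (simp add: mom_def algebra_simps sum.distrib sum_distrib_left)

lemma mom_diff: "mom w (\<lambda>j. a j - b j) = mom w a - mom w b"
  by (simp add: mom_def algebra_simps sum_subtractf)

lemma mom_cong: "(\<And>j. j \<in> J \<Longrightarrow> a j = b j) \<Longrightarrow> mom w a = mom w b"
  by (simp add: mom_def)

lemma mom_add: "mom w (\<lambda>j. a j + b j) = mom w a + mom w b"
  by (simp add: mom_def algebra_simps sum.distrib)

lemma mom_scale: "mom w (\<lambda>j. c * a j) = c * mom w a"
  by (simp add: mom_def sum_distrib_left mult_ac)

lemma mom_divide: "mom w (\<lambda>j. a j / c) = mom w a / c"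
  by (simp add: mom_def sum_divide_distrib)

lemma dens_eq_mom0: "dens L dv h i = mom0 (h i)"
  by (simp add: dens_def mom_def)

end

locale velocity_weight = velocity_grid +
  fixes chi :: "int \<Rightarrow> real" and Dlo Dhi Q :: real
  assumes chi_ok: "chi_ok L dv Dlo Dhi Q chi" and Dlo_pos: "0 < Dlo"
begin

definition wnorm2 :: "(int \<Rightarrow> real) \<Rightarrow> real" where
  "wnorm2 h = (\<Sum>j\<in>J. dv * (h j)\<^sup>2 / chi j)"

definition micro :: "(int \<Rightarrow> real) \<Rightarrow> real" where
  "micro h = wnorm2 h - (mom0 h)\<^sup>2"

lemma chi_pos: "j \<in> J \<Longrightarrow> 0 < chi j"
  using chi_ok unfolding chi_ok_def by blast

lemma mom0_chi: "mom0 chi = 1"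
proof -
  have "(\<Sum>j\<in>J. dv * chi j) = 1"
    using chi_ok unfolding chi_ok_def by blast
  then show ?thesis
    by (simp add: mom_def)
qed

lemma mom2_chi_ge: "Dlo \<le> mom2 chi"
  using chi_ok unfolding chi_ok_def mom_def by blast

lemma mom2_chi_pos: "0 < mom2 chi"
  using mom2_chi_ge Dlo_pos by linarith

lemma mom1_chi: "mom1 chi = 0"
proof -
  have reflect: "1 - j \<in> J" if "j \<in> J" for j
    using that by (auto simp: Jset_def)
  have sym: "chi (1 - j) = chi j" if "j \<in> J" for j
    using chi_ok that unfolding chi_ok_def by metis
  have "mom1 chi = (\<Sum>j\<in>J. dv * v (1 - j) * chi (1 - j))"
    unfolding mom_def
    by (rule sum.reindex_bij_witness[where i="\<lambda>j. 1 - j" and j="\<lambda>j. 1 - j"]) (auto simp: reflect)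
  also have "\<dots> = - mom1 chi"
    unfolding mom_def by (simp add: vel_def sym algebra_simps sum_negf[symmetric] cong: sum.cong)
  finally show ?thesis
    by simp
qed

lemma moment_weight_le:
  assumes "\<And>j. j \<in> J \<Longrightarrow> (w j)\<^sup>2 \<le> c"
  shows "(\<Sum>j\<in>J. dv * (w j)\<^sup>2 * chi j) \<le> c"
proof -
  have "(\<Sum>j\<in>J. dv * (w j)\<^sup>2 * chi j) \<le> (\<Sum>j\<in>J. dv * c * chi j)"
    using assms chi_pos dv_pos by (intro sum_mono mult_right_mono mult_left_mono) (auto intro: less_imp_le)
  also have "\<dots> = c * mom0 chi"
    by (simp add: mom_def sum_distrib_left mult_ac)
  finally show ?thesis
    by (simp add: mom0_chi)
qed

lemma mom2_chi_le: "mom2 chi \<le> vstar\<^sup>2"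
  using moment_weight_le[of v] vel_sq_le by (simp add: mom_def)

lemma wnorm2_nonneg: "0 \<le> wnorm2 h"
  unfolding wnorm2_def using dv_pos chi_pos
  by (intro sum_nonneg) (auto intro: divide_nonneg_pos)

lemma mom_sq_le_wnorm2: "(mom w h)\<^sup>2 \<le> (\<Sum>j\<in>J. dv * (w j)\<^sup>2 * chi j) * wnorm2 h"
  unfolding mom_def wnorm2_def
  by (rule weighted_Cauchy_Schwarz) (use dv_pos chi_pos in auto)

lemma mom0_sq_le: "(mom0 h)\<^sup>2 \<le> wnorm2 h"
  using mom_sq_le_wnorm2[of "\<lambda>_. 1" h] mom0_chi by (simp add: mom_def)

lemma micro_nonneg: "0 \<le> micro h"
  using mom0_sq_le by (simp add: micro_def)

lemma micro_le_wnorm2: "micro h \<le> wnorm2 h"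
  by (simp add: micro_def)

lemma micro_eq: "micro h = wnorm2 (\<lambda>j. h j - mom0 h * chi j)"
proof -
  have "wnorm2 (\<lambda>j. h j - mom0 h * chi j)
      = (\<Sum>j\<in>J. dv * (h j)\<^sup>2 / chi j - 2 * mom0 h * (dv * h j) + (mom0 h)\<^sup>2 * (dv * chi j))"
    unfolding wnorm2_def
    by (intro sum.cong refl) (use chi_pos in \<open>force simp: field_simps power2_eq_square\<close>)
  also have "\<dots> = wnorm2 h - 2 * mom0 h * mom0 h + (mom0 h)\<^sup>2 * mom0 chi"
    by (simp add: sum.distrib sum_subtractf sum_distrib_left wnorm2_def mom_def)
  finally show ?thesis
    by (simp add: mom0_chi micro_def power2_eq_square)
qed

lemma mom_deviation_sq_le:
  "(mom w h - mom0 h * mom w chi)\<^sup>2 \<le> (\<Sum>j\<in>J. dv * (w j)\<^sup>2 * chi j) * micro h"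
proof -
  have "mom w h - mom0 h * mom w chi = mom w (\<lambda>j. h j - mom0 h * chi j)"
    by (simp add: mom_def algebra_simps sum_subtractf sum_distrib_left)
  then show ?thesis
    using mom_sq_le_wnorm2[of w "\<lambda>j. h j - mom0 h * chi j"] by (simp add: micro_eq)
qed

lemma mom1_sq_le: "(mom1 h)\<^sup>2 \<le> mom2 chi * micro h"
  using mom_deviation_sq_le[of v h, unfolded mom1_chi] by (simp add: mom_def)

lemma mom1_sq_le_vstar: "(mom1 h)\<^sup>2 \<le> vstar\<^sup>2 * micro h"
  using mom1_sq_le mult_right_mono[OF mom2_chi_le micro_nonneg] by (rule order_trans)

lemma mom2_deviation_sq_le: "(mom2 h - mom2 chi * mom0 h)\<^sup>2 \<le> vstar ^ 4 * micro h"
proof -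
  have "((v j)\<^sup>2)\<^sup>2 \<le> vstar ^ 4" if "j \<in> J" for j
    using power_mono[OF vel_sq_le[OF that], of 2] by simp
  then have "(\<Sum>j\<in>J. dv * ((v j)\<^sup>2)\<^sup>2 * chi j) \<le> vstar ^ 4"
    by (rule moment_weight_le)
  then have "(\<Sum>j\<in>J. dv * ((v j)\<^sup>2)\<^sup>2 * chi j) * micro h \<le> vstar ^ 4 * micro h"
    using micro_nonneg by (rule mult_right_mono)
  then show ?thesis
    using order_trans[OF mom_deviation_sq_le[of "\<lambda>j. (v j)\<^sup>2" h]] by (simp add: mult.commute)
qed

lemma flux_ratio_sq_le:
  assumes "0 < D" "D \<le> mom2 chi"
  shows "(mom1 h / mom2 chi)\<^sup>2 \<le> micro h / D"
proof -
  have "(mom1 h / mom2 chi)\<^sup>2 \<le> mom2 chi * micro h / (mom2 chi)\<^sup>2"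
    using mom1_sq_le[of h] by (simp add: power_divide divide_right_mono)
  also have "\<dots> = micro h / mom2 chi"
    using mom2_chi_pos by (simp add: power2_eq_square)
  also have "\<dots> \<le> micro h / D"
    using assms micro_nonneg by (intro divide_left_mono) auto
  finally show ?thesis .
qed

lemma mom2_ratio_deviation_sq_le:
  assumes "0 < D" "D \<le> mom2 chi"
  shows "((mom2 h - mom2 chi * mom0 h) / mom2 chi)\<^sup>2 \<le> vstar ^ 4 / D\<^sup>2 * micro h"
proof -
  have "((mom2 h - mom2 chi * mom0 h) / mom2 chi)\<^sup>2 \<le> vstar ^ 4 * micro h / (mom2 chi)\<^sup>2"
    using mom2_deviation_sq_le[of h] by (simp add: power_divide divide_right_mono)
  also have "\<dots> \<le> vstar ^ 4 * micro h / D\<^sup>2"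
    using assms micro_nonneg[of h] by (intro divide_left_mono power_mono mult_nonneg_nonneg) auto
  finally show ?thesis
    by simp
qed

end

definition equiv_const :: "real \<Rightarrow> real" where
  "equiv_const r = r + 1 / r"

definition dissip_const :: "real \<Rightarrow> real" where
  "dissip_const r = min (1 / r\<^sup>2) (r\<^sup>2)"

definition moment_const :: "real \<Rightarrow> real \<Rightarrow> real \<Rightarrow> real" where
  "moment_const r vs D = 2 / D + 2 * vs\<^sup>2 + 2 * vs ^ 4 / D\<^sup>2 + 2 * (r\<^sup>2 + 1 / r\<^sup>2) / D"

definition eps_equiv :: "real \<Rightarrow> real \<Rightarrow> real \<Rightarrow> real" where
  "eps_equiv r l D = 1 / (2 * equiv_const r * (2 / D + 8 * l\<^sup>2))"

definition eps_coerc :: "real \<Rightarrow> real \<Rightarrow> real \<Rightarrow> real \<Rightarrow> real" where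
  "eps_coerc r l vs D = dissip_const r / (2 * (2 + 4 * l\<^sup>2) * moment_const r vs D)"

definition hypo_eps :: "real \<Rightarrow> real \<Rightarrow> real \<Rightarrow> real \<Rightarrow> real" where
  "hypo_eps r l vs D = min 1 (min (eps_equiv r l D) (eps_coerc r l vs D))"

definition hypo_rate :: "real \<Rightarrow> real \<Rightarrow> real \<Rightarrow> real \<Rightarrow> real" where
  "hypo_rate r l vs D = min (dissip_const r / (3 * equiv_const r)) (hypo_eps r l vs D / 3)"

lemma equiv_const_pos: "0 < r \<Longrightarrow> 0 < equiv_const r"
  by (simp add: equiv_const_def add_pos_pos)

lemma equiv_const_ge_1:
  assumes "0 < r"
  shows "1 \<le> equiv_const r"
proof -
  have "equiv_const r - 2 = (r - 1)\<^sup>2 / r"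
    using assms by (simp add: equiv_const_def field_simps power2_eq_square)
  moreover have "0 \<le> (r - 1)\<^sup>2 / r"
    using assms by simp
  ultimately show ?thesis
    by linarith
qed

lemma dissip_const_pos: "0 < r \<Longrightarrow> 0 < dissip_const r"
  by (simp add: dissip_const_def)

lemma moment_const_pos: "0 < r \<Longrightarrow> 0 < D \<Longrightarrow> 0 < moment_const r vs D"
  unfolding moment_const_def by (intro add_pos_nonneg) (auto intro: divide_nonneg_pos)

lemma hypo_eps_pos:
  assumes "0 < r" "0 < D"
  shows "0 < hypo_eps r l vs D"
  using equiv_const_pos[OF assms(1)] dissip_const_pos[OF assms(1)] moment_const_pos[OF assms] assms(2)
  by (simp add: hypo_eps_def eps_equiv_def eps_coerc_def add_pos_nonneg)

lemma hypo_rate_pos: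
  assumes "0 < r" "0 < D"
  shows "0 < hypo_rate r l vs D"
  using hypo_eps_pos[OF assms] dissip_const_pos[OF assms(1)] equiv_const_pos[OF assms(1)]
  by (simp add: hypo_rate_def)

section \<open>The linearized scheme\<close>

locale lf_scheme = velocity_grid L vstar dv
  for L :: nat and vstar dv :: real +
  fixes N :: nat and dx lam rho len :: real
    and chi1 :: "int \<Rightarrow> real" and Dlo1 Dhi1 Q1 :: real
    and chi2 :: "int \<Rightarrow> real" and Dlo2 Dhi2 Q2 :: real
  assumes odd_N: "odd N" and dx_eq: "dx = len / real N"
    and lam_pos: "0 < lam" and rho_pos: "0 < rho" and len_pos: "0 < len"
    and chi1_ok: "chi_ok L dv Dlo1 Dhi1 Q1 chi1" and Dlo1_pos: "0 < Dlo1"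
    and chi2_ok: "chi_ok L dv Dlo2 Dhi2 Q2 chi2" and Dlo2_pos: "0 < Dlo2"

sublocale lf_scheme \<subseteq> w1: velocity_weight L vstar dv chi1 Dlo1 Dhi1 Q1
  by unfold_locales (fact chi1_ok, fact Dlo1_pos)

sublocale lf_scheme \<subseteq> w2: velocity_weight L vstar dv chi2 Dlo2 Dhi2 Q2
  by unfold_locales (fact chi2_ok, fact Dlo2_pos)

context lf_scheme
begin

abbreviation D1 :: real where "D1 \<equiv> mom2 chi1"
abbreviation D2 :: real where "D2 \<equiv> mom2 chi2"
abbreviation Dm :: real where "Dm \<equiv> min Dlo1 Dlo2"

lemma N_pos: "0 < N"
  using odd_N by (cases N) auto

lemma dx_pos: "0 < dx"
  using len_pos N_pos by (simp add: dx_eq)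

lemma N_mult_dx: "real N * dx = len"
  using N_pos by (simp add: dx_eq)

lemma Dm_pos: "0 < Dm"
  using Dlo1_pos Dlo2_pos by simp

lemma D1_ge: "Dm \<le> D1"
  using w1.mom2_chi_ge by simp

lemma D2_ge: "Dm \<le> D2"
  using w2.mom2_chi_ge by simp

definition xsum :: "(nat \<Rightarrow> real) \<Rightarrow> real" where
  "xsum \<phi> = (\<Sum>i<N. dx * \<phi> i)"

lemma xsum_mono: "(\<And>i. i < N \<Longrightarrow> a i \<le> b i) \<Longrightarrow> xsum a \<le> xsum b"
  unfolding xsum_def using dx_pos by (intro sum_mono mult_left_mono) auto

lemma xsum_nonneg: "(\<And>i. i < N \<Longrightarrow> 0 \<le> a i) \<Longrightarrow> 0 \<le> xsum a"
  unfolding xsum_def using dx_pos by (intro sum_nonneg mult_nonneg_nonneg) auto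

lemma xsum_add: "xsum (\<lambda>i. a i + b i) = xsum a + xsum b"
  by (simp add: xsum_def sum.distrib distrib_left)

lemma xsum_diff: "xsum (\<lambda>i. a i - b i) = xsum a - xsum b"
  by (simp add: xsum_def sum_subtractf right_diff_distrib)

lemma xsum_cmult: "xsum (\<lambda>i. c * a i) = c * xsum a"
  by (simp add: xsum_def sum_distrib_left mult_ac)

lemma xsum_cong: "(\<And>i. i < N \<Longrightarrow> a i = b i) \<Longrightarrow> xsum a = xsum b"
  by (simp add: xsum_def)

definition wsum :: "(int \<Rightarrow> real) \<Rightarrow> phase \<Rightarrow> phase \<Rightarrow> real" where
  "wsum w a b = (\<Sum>i<N. \<Sum>j\<in>J. dx * dv * (a i j * b i j * w j))"

definition energy_inner ::
  "phase \<Rightarrow> phase \<Rightarrow> phase \<Rightarrow> phase \<Rightarrow> real"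
  where "energy_inner f g f' g' = wsum (\<lambda>j. 1 / (chi1 j * rho)) f f' + wsum (\<lambda>j. rho / chi2 j) g g'"

abbreviation energy :: "phase \<Rightarrow> phase \<Rightarrow> real" where
  "energy f g \<equiv> energy_inner f g f g"

lemma wsum_add_right: "wsum w a (\<lambda>i j. b i j + c i j) = wsum w a b + wsum w a c"
  by (simp add: wsum_def algebra_simps sum.distrib)

lemma wsum_quadratic:
  "wsum w (\<lambda>i j. a i j + t * b i j) (\<lambda>i j. a i j + t * b i j)
    = wsum w a a + 2 * t * wsum w a b + t\<^sup>2 * wsum w b b"
proof -
  have "dx * dv * ((a i j + t * b i j) * (a i j + t * b i j) * w j)
      = dx * dv * (a i j * a i j * w j) + 2 * t * (dx * dv * (a i j * b i j * w j))
        + t\<^sup>2 * (dx * dv * (b i j * b i j * w j))" for i j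
    by (simp add: algebra_simps power2_eq_square)
  then show ?thesis
    unfolding wsum_def by (simp only: sum.distrib sum_distrib_left[symmetric])
qed

lemma wsum_cong:
  "(\<And>i j. i < N \<Longrightarrow> j \<in> J \<Longrightarrow> a i j = a' i j) \<Longrightarrow> (\<And>i j. i < N \<Longrightarrow> j \<in> J \<Longrightarrow> b i j = b' i j)
    \<Longrightarrow> wsum w a b = wsum w a' b'"
  unfolding wsum_def by (intro sum.cong) auto

lemma energy_quadratic:
  "energy (\<lambda>i j. f i j + t * f' i j) (\<lambda>i j. g i j + t * g' i j)
    = energy f g + 2 * t * energy_inner f g f' g' + t\<^sup>2 * energy f' g'"
  by (simp add: energy_inner_def wsum_quadratic algebra_simps)

lemma energy_cong:
  "(\<And>i j. i < N \<Longrightarrow> j \<in> J \<Longrightarrow> f i j = f' i j) \<Longrightarrow> (\<And>i j. i < N \<Longrightarrow> j \<in> J \<Longrightarrow> g i j = g' i j)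
    \<Longrightarrow> energy f g = energy f' g'"
  unfolding energy_inner_def by (intro arg_cong2[where f="(+)"] wsum_cong) auto

lemma normD_eq: "normD N L dx dv rho chi1 chi2 f g = sqrt (energy f g)"
  unfolding normD_def energy_inner_def wsum_def sum.distrib[symmetric]
  by (simp add: power2_eq_square distrib_left)

lemma energy_eq_xsum: "energy f g = xsum (\<lambda>i. w1.wnorm2 (f i) / rho + rho * w2.wnorm2 (g i))"
proof -
  have "dx * (w1.wnorm2 (f i) / rho + rho * w2.wnorm2 (g i))
      = (\<Sum>j\<in>J. dx * dv * (f i j * f i j * (1 / (chi1 j * rho))))
        + (\<Sum>j\<in>J. dx * dv * (g i j * g i j * (rho / chi2 j)))" for i
    unfolding w1.wnorm2_def w2.wnorm2_def
    by (simp add: distrib_left sum_distrib_left sum_divide_distrib power2_eq_square mult_ac)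
  then show ?thesis
    unfolding energy_inner_def wsum_def xsum_def by (simp add: sum.distrib)
qed

lemma energy_nonneg: "0 \<le> energy f g"
  unfolding energy_eq_xsum using rho_pos w1.wnorm2_nonneg w2.wnorm2_nonneg
  by (intro xsum_nonneg) auto

definition dens_gap :: "phase \<Rightarrow> phase \<Rightarrow> nat \<Rightarrow> real" where
  "dens_gap f g i = mom0 (f i) - mom0 (g i)"

definition flux_gap :: "phase \<Rightarrow> phase \<Rightarrow> nat \<Rightarrow> real" where
  "flux_gap f g i = mom1 (f i) / D1 - mom1 (g i) / D2"

lemma dens_gap_lin:
  "dens_gap (\<lambda>i j. f i j + t * f' i j) (\<lambda>i j. g i j + t * g' i j) i = dens_gap f g i + t * dens_gap f' g' i"
  by (simp add: dens_gap_def mom_lin algebra_simps)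

lemma flux_gap_lin:
  "flux_gap (\<lambda>i j. f i j + t * f' i j) (\<lambda>i j. g i j + t * g' i j) i = flux_gap f g i + t * flux_gap f' g' i"
  by (simp add: flux_gap_def mom_lin algebra_simps add_divide_distrib)

lemma dens_gap_fdiff: "dens_gap (fdiff N f) (fdiff N g) = fdiff N (dens_gap f g)"
  by (simp add: fun_eq_iff dens_gap_def fdiff_def fun_diff_def mom_diff)

lemma flux_gap_fdiff: "flux_gap (fdiff N f) (fdiff N g) = fdiff N (flux_gap f g)"
  by (simp add: fun_eq_iff flux_gap_def fdiff_def fun_diff_def mom_diff diff_divide_distrib)

lemma dens_gap_cong:
  "(\<And>j. j \<in> J \<Longrightarrow> f i j = f' i j) \<Longrightarrow> (\<And>j. j \<in> J \<Longrightarrow> g i j = g' i j)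
    \<Longrightarrow> dens_gap f g i = dens_gap f' g' i"
  unfolding dens_gap_def by (metis mom_cong)

lemma flux_gap_cong:
  "(\<And>j. j \<in> J \<Longrightarrow> f i j = f' i j) \<Longrightarrow> (\<And>j. j \<in> J \<Longrightarrow> g i j = g' i j)
    \<Longrightarrow> flux_gap f g i = flux_gap f' g' i"
  unfolding flux_gap_def by (metis mom_cong)

definition is_potential :: "(nat \<Rightarrow> real) \<Rightarrow> (nat \<Rightarrow> real) \<Rightarrow> bool" where
  "is_potential u \<psi> \<longleftrightarrow> (\<forall>i<N. cdiff N \<psi> i = 2 * dx * (u i - mean N u)) \<and> (\<Sum>i<N. \<psi> i) = 0"

definition potential :: "(nat \<Rightarrow> real) \<Rightarrow> nat \<Rightarrow> real" where
  "potential u = (SOME \<psi>. is_potential u \<psi>)"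

lemma is_potential_potential: "is_potential u (potential u)"
proof -
  have "(\<Sum>i<N. 2 * dx * (u i - mean N u)) = 0"
    using N_pos by (simp add: mean_def sum_subtractf flip: sum_distrib_left)
  then have "\<exists>\<psi>. is_potential u \<psi>"
    unfolding is_potential_def by (rule cdiff_solvable[OF odd_N])
  then show ?thesis
    unfolding potential_def by (rule someI_ex)
qed

lemma is_potential_unique:
  "is_potential u \<psi> \<Longrightarrow> is_potential u \<psi>' \<Longrightarrow> i < N \<Longrightarrow> \<psi> i = \<psi>' i"
  by (rule cdiff_unique[OF odd_N]) (auto simp: is_potential_def)

lemma is_potential_cong:
  assumes "\<And>i. i < N \<Longrightarrow> u i = u' i"
  shows "is_potential u \<psi> = is_potential u' \<psi>"
  using assms mean_cong[of N u u', OF assms] by (simp add: is_potential_def)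

lemma is_potential_lin:
  assumes "is_potential u \<psi>" and "is_potential w \<phi>"
  shows "is_potential (\<lambda>i. u i + t * w i) (\<lambda>i. \<psi> i + t * \<phi> i)"
  unfolding is_potential_def mean_lin
proof (intro conjI allI impI)
  fix i assume "i < N"
  then have \<psi>: "cdiff N \<psi> i = 2 * dx * (u i - mean N u)"
    and \<phi>: "cdiff N \<phi> i = 2 * dx * (w i - mean N w)"
    using assms by (simp_all add: is_potential_def)
  have "cdiff N (\<lambda>i. \<psi> i + t * \<phi> i) i = cdiff N \<psi> i + t * cdiff N \<phi> i"
    by (simp add: cdiff_def algebra_simps)
  also have "\<dots> = 2 * dx * (u i + t * w i - (mean N u + t * mean N w))"
    unfolding \<psi> \<phi> by (simp add: algebra_simps)
  finally show "cdiff N (\<lambda>i. \<psi> i + t * \<phi> i) i = 2 * dx * (u i + t * w i - (mean N u + t * mean N w))" .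
next
  show "(\<Sum>i<N. \<psi> i + t * \<phi> i) = 0"
    using assms by (simp add: is_potential_def sum.distrib flip: sum_distrib_left)
qed

lemma is_potential_fdiff:
  assumes "is_potential u \<psi>"
  shows "is_potential (fdiff N u) (fdiff N \<psi>)"
  unfolding is_potential_def
proof (intro conjI allI impI)
  fix i assume "i < N"
  then have "cdiff N \<psi> (nxt N i) = 2 * dx * (u (nxt N i) - mean N u)"
    and "cdiff N \<psi> i = 2 * dx * (u i - mean N u)"
    using assms N_pos nxt_less by (simp_all add: is_potential_def)
  moreover have "mean N (fdiff N u) = 0"
    by (simp add: mean_def sum_fdiff)
  ultimately show "cdiff N (fdiff N \<psi>) i = 2 * dx * (fdiff N u i - mean N (fdiff N u))"
    using \<open>i < N\<close> by (simp add: cdiff_fdiff fdiff_def algebra_simps)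
next
  show "(\<Sum>i<N. fdiff N \<psi> i) = 0"
    by (rule sum_fdiff)
qed

lemma is_potential_transport:
  assumes "is_potential u \<psi>"
  shows "is_potential (\<lambda>i. cdiff N c i / (2 * dx) - lam / dx * lap N u i)
    (\<lambda>i. c i - mean N c - lam / dx * lap N \<psi> i)"
    (is "is_potential ?u ?\<psi>")
  unfolding is_potential_def
proof (intro conjI allI impI)
  fix i assume "i < N"
  have rel: "cdiff N \<psi> k = 2 * dx * (u k - mean N u)" if "k < N" for k
    using assms that by (simp add: is_potential_def)
  have "lap N (cdiff N \<psi>) i = 2 * dx * lap N u i"
    unfolding lap_def rel[OF \<open>i < N\<close>] rel[OF nxt_less[OF N_pos]] rel[OF prv_less[OF N_pos]]
    by (simp add: algebra_simps)
  then have "cdiff N ?\<psi> i = cdiff N c i - 2 * lam * lap N u i"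
    using dx_pos cdiff_lap[OF \<open>i < N\<close>, of \<psi>] by (simp add: cdiff_def field_simps)
  moreover have "mean N ?u = 0"
    by (simp add: mean_def sum_subtractf sum_cdiff sum_lap flip: sum_divide_distrib sum_distrib_left)
  ultimately show "cdiff N ?\<psi> i = 2 * dx * (?u i - mean N ?u)"
    using dx_pos by (simp only:) (simp add: field_simps)
next
  show "(\<Sum>i<N. ?\<psi> i) = 0"
    using N_pos by (simp add: sum_subtractf sum_lap mean_def flip: sum_distrib_left sum_divide_distrib)
qed

lemma potential_sq_le:
  assumes "is_potential u \<psi>"
  shows "xsum (\<lambda>i. (\<psi> i)\<^sup>2) \<le> 4 * len\<^sup>2 * xsum (\<lambda>i. (u i)\<^sup>2)"
proof -
  have mean_zero: "(\<Sum>i<N. \<psi> i) = 0"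
    using assms by (simp add: is_potential_def)
  have "(\<Sum>i<N. (cdiff N \<psi> i)\<^sup>2) = 4 * dx\<^sup>2 * (\<Sum>i<N. (u i - mean N u)\<^sup>2)"
    using assms by (simp add: is_potential_def power_mult_distrib sum_distrib_left)
  then have "(\<Sum>i<N. (\<psi> i)\<^sup>2) \<le> (real N * dx)\<^sup>2 * 4 * (\<Sum>i<N. (u i - mean N u)\<^sup>2)"
    using cdiff_poincare[OF odd_N mean_zero] by (simp add: power_mult_distrib mult_ac)
  also have "\<dots> \<le> len\<^sup>2 * 4 * (\<Sum>i<N. (u i)\<^sup>2)"
    unfolding N_mult_dx by (intro mult_left_mono sum_sq_deviation_le) auto
  finally show ?thesis
    using dx_pos by (simp add: xsum_def mult_left_mono mult_ac flip: sum_distrib_left)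
qed

section \<open>The modified energy\<close>

definition mod_energy ::
  "real \<Rightarrow> phase \<Rightarrow> phase \<Rightarrow> (nat \<Rightarrow> real) \<Rightarrow> real"
  where "mod_energy e f g \<psi> = energy f g - 2 * e * xsum (\<lambda>i. flux_gap f g i * \<psi> i)"

definition mod_inner ::
  "real \<Rightarrow> phase \<Rightarrow> phase \<Rightarrow> (nat \<Rightarrow> real)
    \<Rightarrow> phase \<Rightarrow> phase \<Rightarrow> (nat \<Rightarrow> real) \<Rightarrow> real"
  where "mod_inner e f g \<psi> f' g' \<psi>' = energy_inner f g f' g'
    - e * (xsum (\<lambda>i. flux_gap f g i * \<psi>' i) + xsum (\<lambda>i. flux_gap f' g' i * \<psi> i))"

lemma mod_energy_quadratic:
  "mod_energy e (\<lambda>i j. f i j + t * f' i j) (\<lambda>i j. g i j + t * g' i j) (\<lambda>i. \<psi> i + t * \<psi>' i)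
    = mod_energy e f g \<psi> + 2 * t * mod_inner e f g \<psi> f' g' \<psi>' + t\<^sup>2 * mod_energy e f' g' \<psi>'"
proof -
  have "xsum (\<lambda>i. flux_gap (\<lambda>i j. f i j + t * f' i j) (\<lambda>i j. g i j + t * g' i j) i * (\<psi> i + t * \<psi>' i))
      = xsum (\<lambda>i. flux_gap f g i * \<psi> i)
        + t * (xsum (\<lambda>i. flux_gap f g i * \<psi>' i) + xsum (\<lambda>i. flux_gap f' g' i * \<psi> i))
        + t\<^sup>2 * xsum (\<lambda>i. flux_gap f' g' i * \<psi>' i)"
    unfolding flux_gap_lin xsum_def
    by (simp add: algebra_simps power2_eq_square sum.distrib sum_distrib_left)
  then show ?thesis
    unfolding mod_energy_def mod_inner_def energy_quadratic by (simp add: algebra_simps)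
qed

lemma mod_energy_cong:
  assumes "\<And>i j. i < N \<Longrightarrow> j \<in> J \<Longrightarrow> f i j = f' i j" "\<And>i j. i < N \<Longrightarrow> j \<in> J \<Longrightarrow> g i j = g' i j"
    and "\<And>i. i < N \<Longrightarrow> \<psi> i = \<psi>' i"
  shows "mod_energy e f g \<psi> = mod_energy e f' g' \<psi>'"
proof -
  have "xsum (\<lambda>i. flux_gap f g i * \<psi> i) = xsum (\<lambda>i. flux_gap f' g' i * \<psi>' i)"
    using assms by (intro xsum_cong) (metis flux_gap_cong)
  then show ?thesis
    unfolding mod_energy_def using energy_cong[OF assms(1,2)] by simp
qed

lemma wnorm2_sum_le:
  "w1.wnorm2 a + w2.wnorm2 b \<le> equiv_const rho * (w1.wnorm2 a / rho + rho * w2.wnorm2 b)"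
proof -
  have "equiv_const rho * (w1.wnorm2 a / rho + rho * w2.wnorm2 b)
      = w1.wnorm2 a + w2.wnorm2 b + w1.wnorm2 a / rho\<^sup>2 + rho\<^sup>2 * w2.wnorm2 b"
    using rho_pos by (simp add: equiv_const_def field_simps power2_eq_square)
  then show ?thesis
    using w1.wnorm2_nonneg[of a] w2.wnorm2_nonneg[of b] by simp
qed

lemma dens_gap_sq_le:
  "(dens_gap f g i)\<^sup>2 \<le> 2 * (equiv_const rho * (w1.wnorm2 (f i) / rho + rho * w2.wnorm2 (g i)))"
  using sq_diff_le[of "mom0 (f i)" "mom0 (g i)"] w1.mom0_sq_le[of "f i"] w2.mom0_sq_le[of "g i"]
    wnorm2_sum_le[of "f i" "g i"]
  by (simp add: dens_gap_def)

lemma flux_gap_sq_le_micro: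
  "(flux_gap f g i)\<^sup>2 \<le> 2 / Dm * (w1.micro (f i) + w2.micro (g i))"
  using sq_diff_le[of "mom1 (f i) / D1" "mom1 (g i) / D2"]
    w1.flux_ratio_sq_le[OF Dm_pos D1_ge, of "f i"] w2.flux_ratio_sq_le[OF Dm_pos D2_ge, of "g i"]
  by (simp add: flux_gap_def add_divide_distrib)

lemma flux_gap_sq_le:
  "(flux_gap f g i)\<^sup>2 \<le> 2 / Dm * (equiv_const rho * (w1.wnorm2 (f i) / rho + rho * w2.wnorm2 (g i)))"
proof -
  have "w1.micro (f i) + w2.micro (g i)
      \<le> equiv_const rho * (w1.wnorm2 (f i) / rho + rho * w2.wnorm2 (g i))"
    using w1.micro_le_wnorm2[of "f i"] w2.micro_le_wnorm2[of "g i"] wnorm2_sum_le[of "f i" "g i"]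
    by linarith
  then show ?thesis
    using Dm_pos by (intro order_trans[OF flux_gap_sq_le_micro mult_left_mono]) auto
qed

lemma xsum_abs_le: "\<bar>xsum a\<bar> \<le> xsum (\<lambda>i. \<bar>a i\<bar>)"
  using dx_pos by (simp add: xsum_def abs_mult order_trans[OF sum_abs])

lemma correction_le:
  assumes "is_potential (dens_gap f g) \<psi>"
  shows "\<bar>2 * xsum (\<lambda>i. flux_gap f g i * \<psi> i)\<bar> \<le> equiv_const rho * (2 / Dm + 8 * len\<^sup>2) * energy f g"
proof -
  let ?E = "equiv_const rho * energy f g"
  have "\<bar>2 * xsum (\<lambda>i. flux_gap f g i * \<psi> i)\<bar> \<le> xsum (\<lambda>i. \<bar>2 * flux_gap f g i * \<psi> i\<bar>)"
    using xsum_abs_le by (simp add: mult.assoc flip: xsum_cmult)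
  also have "\<dots> \<le> xsum (\<lambda>i. (flux_gap f g i)\<^sup>2) + xsum (\<lambda>i. (\<psi> i)\<^sup>2)"
    unfolding xsum_add[symmetric] by (intro xsum_mono abs_two_mult_le)
  finally have split: "\<bar>2 * xsum (\<lambda>i. flux_gap f g i * \<psi> i)\<bar>
      \<le> xsum (\<lambda>i. (flux_gap f g i)\<^sup>2) + xsum (\<lambda>i. (\<psi> i)\<^sup>2)" .
  have flux: "xsum (\<lambda>i. (flux_gap f g i)\<^sup>2) \<le> 2 / Dm * ?E"
    unfolding energy_eq_xsum xsum_cmult[symmetric] by (intro xsum_mono flux_gap_sq_le)
  have "xsum (\<lambda>i. (dens_gap f g i)\<^sup>2) \<le> 2 * ?E"
    unfolding energy_eq_xsum xsum_cmult[symmetric] by (intro xsum_mono dens_gap_sq_le)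
  then have "4 * len\<^sup>2 * xsum (\<lambda>i. (dens_gap f g i)\<^sup>2) \<le> 4 * len\<^sup>2 * (2 * ?E)"
    by (rule mult_left_mono) simp
  with potential_sq_le[OF assms]
  have potential: "xsum (\<lambda>i. (\<psi> i)\<^sup>2) \<le> 4 * len\<^sup>2 * (2 * ?E)"
    by (rule order_trans)
  have "equiv_const rho * (2 / Dm + 8 * len\<^sup>2) * energy f g = 2 / Dm * ?E + 4 * len\<^sup>2 * (2 * ?E)"
    by (simp add: algebra_simps)
  with split flux potential show ?thesis
    by linarith
qed

lemma mod_energy_equiv:
  assumes "is_potential (dens_gap f g) \<psi>" and "0 \<le> e" and "e \<le> eps_equiv rho len Dm"
  shows "energy f g / 2 \<le> mod_energy e f g \<psi>" and "mod_energy e f g \<psi> \<le> 3 / 2 * energy f g"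
proof -
  define K where "K = equiv_const rho * (2 / Dm + 8 * len\<^sup>2)"
  have "0 < K"
    using equiv_const_pos[OF rho_pos] Dm_pos by (simp add: K_def add_pos_nonneg)
  have "eps_equiv rho len Dm = 1 / (2 * K)"
    by (simp add: eps_equiv_def K_def mult.assoc)
  then have "e * K \<le> 1 / 2"
    using assms(3) \<open>0 < K\<close> by (simp add: le_divide_eq mult_ac)
  have "e * \<bar>2 * xsum (\<lambda>i. flux_gap f g i * \<psi> i)\<bar> \<le> e * (K * energy f g)"
    using correction_le[OF assms(1)] assms(2) unfolding K_def by (rule mult_left_mono)
  also have "\<dots> \<le> 1 / 2 * energy f g"
    unfolding mult.assoc[symmetric] using \<open>e * K \<le> 1 / 2\<close> energy_nonneg[of f g]
    by (rule mult_right_mono)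
  finally have "e * \<bar>2 * xsum (\<lambda>i. flux_gap f g i * \<psi> i)\<bar> \<le> energy f g / 2"
    by simp
  then have "\<bar>2 * e * xsum (\<lambda>i. flux_gap f g i * \<psi> i)\<bar> \<le> energy f g / 2"
    using assms(2) by (simp add: abs_mult mult_ac)
  then show "energy f g / 2 \<le> mod_energy e f g \<psi>" and "mod_energy e f g \<psi> \<le> 3 / 2 * energy f g"
    unfolding mod_energy_def by linarith+
qed

definition transport :: "phase \<Rightarrow> phase" where
  "transport h i j = v j * cdiff N (\<lambda>k. h k j) i / (2 * dx) - lam / dx * lap N (\<lambda>k. h k j) i"

definition coll_f :: "phase \<Rightarrow> phase \<Rightarrow> phase" where
  "coll_f f g i j = rho * mom0 (g i) * chi1 j + f i j / rho"

definition coll_g :: "phase \<Rightarrow> phase \<Rightarrow> phase" where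
  "coll_g f g i j = mom0 (f i) / rho * chi2 j + rho * g i j"

definition opB_f :: "phase \<Rightarrow> phase \<Rightarrow> phase" where
  "opB_f f g i j = transport f i j + coll_f f g i j"

definition opB_g :: "phase \<Rightarrow> phase \<Rightarrow> phase" where
  "opB_g f g i j = transport g i j + coll_g f g i j"

lemma LF_flux_diff:
  "(LF_flux dv lam (v j) (h i j) (h (nxt N i) j) - LF_flux dv lam (v j) (h (prv N i) j) (h i j)) / (dx * dv)
    = transport h i j"
  unfolding LF_flux_def transport_def cdiff_def lap_def using dx_pos dv_pos by (simp add: field_simps)

lemma scheme_step:
  assumes "scheme N L dx dv dt lam rho chi1 chi2 f g" and "0 < dt" and "i < N" and "j \<in> J"
  shows "f n i j = f (Suc n) i j + dt * opB_f (f (Suc n)) (g (Suc n)) i j"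
    and "g n i j = g (Suc n) i j + dt * opB_g (f (Suc n)) (g (Suc n)) i j"
  using assms(1)[unfolded scheme_def, rule_format, OF assms(3,4), of n] assms(2)
  unfolding LF_flux_diff dens_eq_mom0 by (auto simp: opB_f_def opB_g_def coll_f_def coll_g_def field_simps)

definition current_gap :: "phase \<Rightarrow> phase \<Rightarrow> nat \<Rightarrow> real" where
  "current_gap f g i = mom1 (f i) - mom1 (g i)"

definition pressure_gap :: "phase \<Rightarrow> phase \<Rightarrow> nat \<Rightarrow> real" where
  "pressure_gap f g i = mom2 (f i) / D1 - mom2 (g i) / D2"

definition relax_gap :: "phase \<Rightarrow> phase \<Rightarrow> nat \<Rightarrow> real" where
  "relax_gap f g i = mom1 (f i) / (rho * D1) - rho * mom1 (g i) / D2"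

lemma mom_transport:
  "mom w (transport h i)
    = cdiff N (\<lambda>k. mom (\<lambda>j. w j * v j) (h k)) i / (2 * dx) - lam / dx * lap N (\<lambda>k. mom w (h k)) i"
  unfolding mom_def transport_def cdiff_def lap_def
  by (simp add: diff_divide_distrib sum_subtractf sum.distrib sum_distrib_left sum_divide_distrib
      algebra_simps)

lemma mom_opB_f:
  "mom w (opB_f f g i) = mom w (transport f i) + rho * mom0 (g i) * mom w chi1 + mom w (f i) / rho"
  unfolding opB_f_def coll_f_def mom_add mom_scale mom_divide by (simp only: add.assoc)

lemma mom_opB_g:
  "mom w (opB_g f g i) = mom w (transport g i) + mom0 (f i) / rho * mom w chi2 + rho * mom w (g i)"
  unfolding opB_g_def coll_g_def mom_add mom_scale by (simp only: add.assoc)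

lemma dens_gap_opB:
  "dens_gap (opB_f f g) (opB_g f g) i
    = cdiff N (current_gap f g) i / (2 * dx) - lam / dx * lap N (dens_gap f g) i"
  unfolding dens_gap_def current_gap_def mom_opB_f mom_opB_g mom_transport w1.mom0_chi w2.mom0_chi
  using dx_pos by (simp add: cdiff_def lap_def field_simps)

lemma flux_gap_opB:
  "flux_gap (opB_f f g) (opB_g f g) i
    = cdiff N (pressure_gap f g) i / (2 * dx) - lam / dx * lap N (flux_gap f g) i + relax_gap f g i"
proof -
  have "(\<lambda>j. v j * v j) = (\<lambda>j. (v j)\<^sup>2)"
    by (simp add: power2_eq_square)
  then show ?thesis
    unfolding flux_gap_def pressure_gap_def relax_gap_def mom_opB_f mom_opB_g mom_transport
      w1.mom1_chi w2.mom1_chi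
    using dx_pos rho_pos w1.mom2_chi_pos w2.mom2_chi_pos by (simp add: cdiff_def lap_def field_simps)
qed

lemma wsum_transport: "wsum w h (transport h) = lam / dx * wsum w (fdiff N h) (fdiff N h)"
proof -
  have "(\<Sum>i<N. dx * dv * (h i j * transport h i j * w j))
      = dv * w j * (v j / 2 * (\<Sum>i<N. h i j * cdiff N (\<lambda>k. h k j) i)
          - lam * (\<Sum>i<N. h i j * lap N (\<lambda>k. h k j) i))" for j
    using dx_pos
    by (simp add: transport_def sum_subtractf sum_distrib_left algebra_simps diff_divide_distrib)
  also have "\<dots> j = (\<Sum>i<N. lam / dx * (dx * dv * (fdiff N h i j * fdiff N h i j * w j)))" for j
    using dx_pos
    by (simp add: sum_mult_cdiff_self sum_mult_lap_self fdiff_def fun_diff_def sum_distrib_left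
        power2_eq_square mult_ac)
  finally show ?thesis
    unfolding wsum_def by (subst (1 2) sum.swap) (simp add: sum_distrib_left)
qed

lemma mom0_eq: "mom0 h = (\<Sum>j\<in>J. dv * h j)"
  by (simp add: mom_def)

lemma wsum_collision_f:
  "wsum (\<lambda>j. 1 / (chi1 j * rho)) f (coll_f f g)
    = xsum (\<lambda>i. mom0 (f i) * mom0 (g i) + w1.wnorm2 (f i) / rho\<^sup>2)"
proof -
  have "(\<Sum>j\<in>J. dx * dv * (f i j * (rho * mom0 (g i) * chi1 j + f i j / rho) * (1 / (chi1 j * rho))))
      = (\<Sum>j\<in>J. dx * mom0 (g i) * (dv * f i j) + dx / rho\<^sup>2 * (dv * (f i j)\<^sup>2 / chi1 j))" for i
    by (intro sum.cong refl) (use rho_pos w1.chi_pos in \<open>force simp: field_simps power2_eq_square\<close>)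
  also have "\<dots> i = dx * (mom0 (f i) * mom0 (g i) + w1.wnorm2 (f i) / rho\<^sup>2)" for i
    unfolding mom0_eq w1.wnorm2_def sum.distrib sum_distrib_left[symmetric] by (simp add: algebra_simps)
  finally show ?thesis
    by (simp add: wsum_def xsum_def coll_f_def coll_g_def)
qed

lemma wsum_collision_g:
  "wsum (\<lambda>j. rho / chi2 j) g (coll_g f g)
    = xsum (\<lambda>i. mom0 (f i) * mom0 (g i) + rho\<^sup>2 * w2.wnorm2 (g i))"
proof -
  have "(\<Sum>j\<in>J. dx * dv * (g i j * (mom0 (f i) / rho * chi2 j + rho * g i j) * (rho / chi2 j)))
      = (\<Sum>j\<in>J. dx * mom0 (f i) * (dv * g i j) + dx * rho\<^sup>2 * (dv * (g i j)\<^sup>2 / chi2 j))" for i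
    by (intro sum.cong refl) (use rho_pos w2.chi_pos in \<open>force simp: field_simps power2_eq_square\<close>)
  also have "\<dots> i = dx * (mom0 (f i) * mom0 (g i) + rho\<^sup>2 * w2.wnorm2 (g i))" for i
    unfolding mom0_eq w2.wnorm2_def sum.distrib sum_distrib_left[symmetric] by (simp add: algebra_simps)
  finally show ?thesis
    by (simp add: wsum_def xsum_def coll_f_def coll_g_def)
qed

definition dissip :: "(int \<Rightarrow> real) \<Rightarrow> (int \<Rightarrow> real) \<Rightarrow> real" where
  "dissip a b = w1.wnorm2 a / rho\<^sup>2 + rho\<^sup>2 * w2.wnorm2 b + 2 * mom0 a * mom0 b"

lemma energy_inner_opB:
  "energy_inner f g (opB_f f g) (opB_g f g)
    = xsum (\<lambda>i. dissip (f i) (g i)) + lam / dx * energy (fdiff N f) (fdiff N g)"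
proof -
  have opB_f: "opB_f f g = (\<lambda>i j. transport f i j + coll_f f g i j)"
    and opB_g: "opB_g f g = (\<lambda>i j. transport g i j + coll_g f g i j)"
    by (simp_all add: fun_eq_iff opB_f_def opB_g_def)
  have "xsum (\<lambda>i. mom0 (f i) * mom0 (g i) + w1.wnorm2 (f i) / rho\<^sup>2)
      + xsum (\<lambda>i. mom0 (f i) * mom0 (g i) + rho\<^sup>2 * w2.wnorm2 (g i)) = xsum (\<lambda>i. dissip (f i) (g i))"
    unfolding xsum_add[symmetric] dissip_def by (simp add: algebra_simps)
  then show ?thesis
    unfolding energy_inner_def opB_f opB_g wsum_add_right wsum_transport wsum_collision_f
      wsum_collision_g
    by (simp add: algebra_simps)
qed

definition opB_potential :: "phase \<Rightarrow> phase \<Rightarrow> (nat \<Rightarrow> real) \<Rightarrow> nat \<Rightarrow> real"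
  where "opB_potential f g \<psi> i = current_gap f g i - mean N (current_gap f g) - lam / dx * lap N \<psi> i"

lemma is_potential_opB:
  assumes "is_potential (dens_gap f g) \<psi>"
  shows "is_potential (dens_gap (opB_f f g) (opB_g f g)) (opB_potential f g \<psi>)"
proof -
  have "dens_gap (opB_f f g) (opB_g f g)
      = (\<lambda>i. cdiff N (current_gap f g) i / (2 * dx) - lam / dx * lap N (dens_gap f g) i)"
    by (simp add: fun_eq_iff dens_gap_opB)
  then show ?thesis
    using is_potential_transport[OF assms] by (simp add: opB_potential_def[abs_def])
qed

lemma mean_dens_gap_opB: "mean N (dens_gap (opB_f f g) (opB_g f g)) = 0"
  by (simp add: dens_gap_opB mean_def sum_subtractf sum_cdiff sum_lap
      flip: sum_divide_distrib sum_distrib_left)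

lemma xsum_mult_lap: "xsum (\<lambda>i. a i * lap N b i) = - xsum (\<lambda>i. fdiff N a i * fdiff N b i)"
  unfolding xsum_def sum_distrib_left[symmetric] sum_mult_lap by simp

lemma sum_mult_cdiff_potential:
  assumes "is_potential u \<psi>"
  shows "(\<Sum>i<N. \<psi> i * cdiff N p i) = - 2 * xsum (\<lambda>i. p i * (u i - mean N u))"
proof -
  have "(\<Sum>i<N. \<psi> i * cdiff N p i) = - (\<Sum>i<N. cdiff N \<psi> i * p i)"
    by (rule sum_mult_cdiff)
  also have "\<dots> = - (\<Sum>i<N. 2 * (dx * (p i * (u i - mean N u))))"
    using assms by (simp add: is_potential_def mult_ac)
  finally show ?thesis
    by (simp add: xsum_def sum_distrib_left sum_negf)
qed

lemma mod_inner_opB_eq: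
  assumes "is_potential (dens_gap f g) \<psi>"
  shows "mod_inner e f g \<psi> (opB_f f g) (opB_g f g) (opB_potential f g \<psi>)
    = xsum (\<lambda>i. dissip (f i) (g i)) + lam / dx * mod_energy e (fdiff N f) (fdiff N g) (fdiff N \<psi>)
      - e * xsum (\<lambda>i. flux_gap f g i * (current_gap f g i - mean N (current_gap f g)))
      + e * xsum (\<lambda>i. pressure_gap f g i * (dens_gap f g i - mean N (dens_gap f g)))
      - e * xsum (\<lambda>i. relax_gap f g i * \<psi> i)"
proof -
  define Z where "Z = xsum (\<lambda>i. fdiff N (flux_gap f g) i * fdiff N \<psi> i)"
  have potential_split: "(\<lambda>i. flux_gap f g i * opB_potential f g \<psi> i)
      = (\<lambda>i. flux_gap f g i * (current_gap f g i - mean N (current_gap f g))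
          - lam / dx * (flux_gap f g i * lap N \<psi> i))"
    by (simp add: fun_eq_iff opB_potential_def algebra_simps)
  have potential_term: "xsum (\<lambda>i. flux_gap f g i * opB_potential f g \<psi> i)
      = xsum (\<lambda>i. flux_gap f g i * (current_gap f g i - mean N (current_gap f g))) + lam / dx * Z"
    unfolding potential_split xsum_diff xsum_cmult xsum_mult_lap Z_def by simp
  have flux_split: "(\<lambda>i. flux_gap (opB_f f g) (opB_g f g) i * \<psi> i)
      = (\<lambda>i. 1 / (2 * dx) * (\<psi> i * cdiff N (pressure_gap f g) i)
          - lam / dx * (\<psi> i * lap N (flux_gap f g) i) + relax_gap f g i * \<psi> i)"
    by (simp add: fun_eq_iff flux_gap_opB algebra_simps)
  have cdiff_term: "xsum (\<lambda>i. \<psi> i * cdiff N (pressure_gap f g) i)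
      = - 2 * dx * xsum (\<lambda>i. pressure_gap f g i * (dens_gap f g i - mean N (dens_gap f g)))"
    using sum_mult_cdiff_potential[OF assms] by (simp add: xsum_def flip: sum_distrib_left)
  have lap_term: "xsum (\<lambda>i. \<psi> i * lap N (flux_gap f g) i) = - Z"
    using xsum_mult_lap[of \<psi> "flux_gap f g"] by (simp add: Z_def mult.commute)
  have flux_term: "xsum (\<lambda>i. flux_gap (opB_f f g) (opB_g f g) i * \<psi> i)
      = - xsum (\<lambda>i. pressure_gap f g i * (dens_gap f g i - mean N (dens_gap f g)))
        + lam / dx * Z + xsum (\<lambda>i. relax_gap f g i * \<psi> i)"
    unfolding flux_split xsum_add xsum_diff xsum_cmult cdiff_term lap_term using dx_pos by simp
  have fdiff_term: "mod_energy e (fdiff N f) (fdiff N g) (fdiff N \<psi>)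
      = energy (fdiff N f) (fdiff N g) - 2 * e * Z"
    by (simp add: mod_energy_def flux_gap_fdiff Z_def)
  show ?thesis
    unfolding mod_inner_def energy_inner_opB potential_term flux_term fdiff_term
    by (simp add: algebra_simps)
qed

section \<open>Coercivity\<close>

abbreviation G :: real where "G \<equiv> moment_const rho vstar Dm"

definition micro_sum :: "phase \<Rightarrow> phase \<Rightarrow> nat \<Rightarrow> real" where
  "micro_sum f g i = w1.micro (f i) + w2.micro (g i)"

definition relax_dens :: "phase \<Rightarrow> phase \<Rightarrow> nat \<Rightarrow> real" where
  "relax_dens f g i = mom0 (f i) / rho + rho * mom0 (g i)"

lemma micro_sum_nonneg: "0 \<le> micro_sum f g i"
  using w1.micro_nonneg w2.micro_nonneg by (simp add: micro_sum_def add_nonneg_nonneg)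

lemma le_moment_const: "x \<le> c * micro_sum f g i \<Longrightarrow> c \<le> G \<Longrightarrow> x \<le> G * micro_sum f g i"
  using mult_right_mono[of c G "micro_sum f g i"] micro_sum_nonneg[of f g i] by linarith

lemma moment_const_ge:
  "2 / Dm \<le> G" "2 * vstar\<^sup>2 \<le> G" "2 * vstar ^ 4 / Dm\<^sup>2 \<le> G" "2 * (rho\<^sup>2 + 1 / rho\<^sup>2) / Dm \<le> G"
  using Dm_pos rho_pos unfolding moment_const_def by (auto intro!: add_nonneg_nonneg divide_nonneg_pos)

lemma flux_gap_le_micro: "(flux_gap f g i)\<^sup>2 \<le> G * micro_sum f g i"
  using flux_gap_sq_le_micro[of f g i, folded micro_sum_def] moment_const_ge(1) by (rule le_moment_const)

lemma current_gap_le_micro: "(current_gap f g i)\<^sup>2 \<le> G * micro_sum f g i"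
proof -
  have "(current_gap f g i)\<^sup>2 \<le> 2 * (mom1 (f i))\<^sup>2 + 2 * (mom1 (g i))\<^sup>2"
    unfolding current_gap_def by (rule sq_diff_le)
  also have "\<dots> \<le> 2 * vstar\<^sup>2 * micro_sum f g i"
    using w1.mom1_sq_le_vstar[of "f i"] w2.mom1_sq_le_vstar[of "g i"]
    by (simp add: micro_sum_def algebra_simps)
  finally show ?thesis
    using moment_const_ge(2) by (rule le_moment_const)
qed

lemma pressure_gap_le_micro: "(pressure_gap f g i - dens_gap f g i)\<^sup>2 \<le> G * micro_sum f g i"
proof -
  have "pressure_gap f g i - dens_gap f g i
      = (mom2 (f i) - D1 * mom0 (f i)) / D1 - (mom2 (g i) - D2 * mom0 (g i)) / D2"
    using w1.mom2_chi_pos w2.mom2_chi_pos by (simp add: pressure_gap_def dens_gap_def field_simps)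
  then have "(pressure_gap f g i - dens_gap f g i)\<^sup>2
      \<le> 2 * ((mom2 (f i) - D1 * mom0 (f i)) / D1)\<^sup>2 + 2 * ((mom2 (g i) - D2 * mom0 (g i)) / D2)\<^sup>2"
    by (simp add: sq_diff_le)
  also have "\<dots> \<le> 2 * (vstar ^ 4 / Dm\<^sup>2 * w1.micro (f i)) + 2 * (vstar ^ 4 / Dm\<^sup>2 * w2.micro (g i))"
    using w1.mom2_ratio_deviation_sq_le[OF Dm_pos D1_ge, of "f i"]
      w2.mom2_ratio_deviation_sq_le[OF Dm_pos D2_ge, of "g i"]
    by (intro add_mono mult_left_mono) auto
  also have "\<dots> = 2 * vstar ^ 4 / Dm\<^sup>2 * micro_sum f g i"
    by (simp add: micro_sum_def algebra_simps add_divide_distrib)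
  finally show ?thesis
    using moment_const_ge(3) by (rule le_moment_const)
qed

lemma relax_gap_le_micro: "(relax_gap f g i)\<^sup>2 \<le> G * micro_sum f g i"
proof -
  have "(relax_gap f g i)\<^sup>2 \<le> 2 * (1 / rho\<^sup>2 * (mom1 (f i) / D1)\<^sup>2) + 2 * (rho\<^sup>2 * (mom1 (g i) / D2)\<^sup>2)"
    using sq_diff_le[of "mom1 (f i) / (rho * D1)" "rho * mom1 (g i) / D2"]
    by (simp add: relax_gap_def power_divide power_mult_distrib)
  also have "\<dots> \<le> 2 * (1 / rho\<^sup>2 * (w1.micro (f i) / Dm)) + 2 * (rho\<^sup>2 * (w2.micro (g i) / Dm))"
    using w1.flux_ratio_sq_le[OF Dm_pos D1_ge, of "f i"] w2.flux_ratio_sq_le[OF Dm_pos D2_ge, of "g i"]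
    by (intro add_mono mult_left_mono) auto
  also have "\<dots> \<le> 2 * (rho\<^sup>2 + 1 / rho\<^sup>2) / Dm * micro_sum f g i"
    using Dm_pos rho_pos w1.micro_nonneg[of "f i"] w2.micro_nonneg[of "g i"]
    by (simp add: micro_sum_def field_simps)
  finally show ?thesis
    using moment_const_ge(4) by (rule le_moment_const)
qed

lemma dissip_ge:
  "dissip_const rho * micro_sum f g i + (relax_dens f g i)\<^sup>2 \<le> dissip (f i) (g i)"
proof -
  have "dissip (f i) (g i) = w1.micro (f i) / rho\<^sup>2 + rho\<^sup>2 * w2.micro (g i) + (relax_dens f g i)\<^sup>2"
    unfolding dissip_def relax_dens_def w1.micro_def w2.micro_def
    using rho_pos by (simp add: field_simps power2_eq_square)
  moreover have "dissip_const rho * w1.micro (f i) \<le> w1.micro (f i) / rho\<^sup>2"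
    using w1.micro_nonneg[of "f i"] mult_right_mono[of "dissip_const rho" "1 / rho\<^sup>2"]
    by (simp add: dissip_const_def)
  moreover have "dissip_const rho * w2.micro (g i) \<le> rho\<^sup>2 * w2.micro (g i)"
    using w2.micro_nonneg[of "g i"] mult_right_mono[of "dissip_const rho" "rho\<^sup>2"]
    by (simp add: dissip_const_def)
  ultimately show ?thesis
    by (simp add: micro_sum_def algebra_simps)
qed

lemma cell_energy_le:
  "w1.wnorm2 (f i) / rho + rho * w2.wnorm2 (g i)
    \<le> equiv_const rho * micro_sum f g i + (dens_gap f g i)\<^sup>2 + (relax_dens f g i)\<^sup>2"
proof -
  have "equiv_const rho * ((mom0 (f i))\<^sup>2 / rho + rho * (mom0 (g i))\<^sup>2)
      = (dens_gap f g i)\<^sup>2 + (relax_dens f g i)\<^sup>2"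
    unfolding equiv_const_def dens_gap_def relax_dens_def
    using rho_pos by (simp add: field_simps power2_eq_square)
  then have "(mom0 (f i))\<^sup>2 / rho + rho * (mom0 (g i))\<^sup>2 \<le> (dens_gap f g i)\<^sup>2 + (relax_dens f g i)\<^sup>2"
    using mult_right_mono[OF equiv_const_ge_1[OF rho_pos], of "(mom0 (f i))\<^sup>2 / rho + rho * (mom0 (g i))\<^sup>2"]
      rho_pos by simp
  moreover have "w1.micro (f i) / rho + rho * w2.micro (g i) \<le> equiv_const rho * micro_sum f g i"
    using rho_pos w1.micro_nonneg[of "f i"] w2.micro_nonneg[of "g i"]
    by (simp add: micro_sum_def equiv_const_def field_simps)
  moreover have "w1.wnorm2 (f i) / rho + rho * w2.wnorm2 (g i)
      = (w1.micro (f i) / rho + rho * w2.micro (g i)) + ((mom0 (f i))\<^sup>2 / rho + rho * (mom0 (g i))\<^sup>2)"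
    by (simp add: w1.micro_def w2.micro_def diff_divide_distrib algebra_simps)
  ultimately show ?thesis
    by linarith
qed

abbreviation eps :: real where "eps \<equiv> hypo_eps rho len vstar Dm"
abbreviation rate :: real where "rate \<equiv> hypo_rate rho len vstar Dm"

lemma eps_pos: "0 < eps"
  by (rule hypo_eps_pos[OF rho_pos Dm_pos])

lemma rate_pos: "0 < rate"
  by (rule hypo_rate_pos[OF rho_pos Dm_pos])

lemma eps_le: "eps \<le> 1" "eps \<le> eps_equiv rho len Dm" "eps \<le> eps_coerc rho len vstar Dm"
  by (simp_all add: hypo_eps_def)

lemma eps_moment_const_le: "eps * G * (2 + 4 * len\<^sup>2) \<le> dissip_const rho / 2"
proof -
  have "eps * (2 * (2 + 4 * len\<^sup>2) * G) \<le> dissip_const rho"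
    using eps_le(3) moment_const_pos[OF rho_pos Dm_pos]
    by (simp add: eps_coerc_def pos_le_divide_eq add_pos_nonneg)
  then show ?thesis
    by (simp add: algebra_simps)
qed

lemma rate_le: "rate \<le> dissip_const rho / (3 * equiv_const rho)" "rate \<le> eps / 3"
  by (simp_all add: hypo_rate_def)

lemma xsum_sq_current_deviation_le:
  "xsum (\<lambda>i. (current_gap f g i - mean N (current_gap f g))\<^sup>2) \<le> G * xsum (micro_sum f g)"
proof -
  have "xsum (\<lambda>i. (current_gap f g i - mean N (current_gap f g))\<^sup>2) \<le> xsum (\<lambda>i. (current_gap f g i)\<^sup>2)"
    unfolding xsum_def using dx_pos sum_sq_deviation_le
    by (simp add: mult_left_mono flip: sum_distrib_left)
  also have "\<dots> \<le> G * xsum (micro_sum f g)"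
    unfolding xsum_cmult[symmetric] by (intro xsum_mono current_gap_le_micro)
  finally show ?thesis .
qed

lemma dissipation_lower_bound:
  assumes "is_potential (dens_gap f g) \<psi>"
  shows "dissip_const rho / 2 * xsum (micro_sum f g) + xsum (\<lambda>i. (relax_dens f g i)\<^sup>2)
      + eps / 2 * xsum (\<lambda>i. (dens_gap f g i)\<^sup>2)
    \<le> xsum (\<lambda>i. dissip (f i) (g i))
      - eps * xsum (\<lambda>i. flux_gap f g i * (current_gap f g i - mean N (current_gap f g)))
      + eps * xsum (\<lambda>i. pressure_gap f g i * dens_gap f g i) - eps * xsum (\<lambda>i. relax_gap f g i * \<psi> i)"
proof -
  define c where "c = dissip_const rho - eps * G * (3 / 2 + 4 * len\<^sup>2)"
  let ?J = "\<lambda>i. current_gap f g i - mean N (current_gap f g)"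
  have "xsum (\<lambda>i. c * micro_sum f g i + (relax_dens f g i)\<^sup>2 + 3 / 4 * eps * (dens_gap f g i)\<^sup>2
        - eps / 2 * (?J i)\<^sup>2 - eps / (16 * len\<^sup>2) * (\<psi> i)\<^sup>2)
    \<le> xsum (\<lambda>i. dissip (f i) (g i) - eps * (flux_gap f g i * ?J i)
        + eps * (pressure_gap f g i * dens_gap f g i) - eps * (relax_gap f g i * \<psi> i))"
    unfolding c_def using eps_pos len_pos
    by (intro xsum_mono cell_coercivity dissip_ge flux_gap_le_micro pressure_gap_le_micro
        relax_gap_le_micro) auto
  then have sum: "c * xsum (micro_sum f g) + xsum (\<lambda>i. (relax_dens f g i)\<^sup>2)
        + 3 / 4 * eps * xsum (\<lambda>i. (dens_gap f g i)\<^sup>2) - eps / 2 * xsum (\<lambda>i. (?J i)\<^sup>2)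
        - eps / (16 * len\<^sup>2) * xsum (\<lambda>i. (\<psi> i)\<^sup>2)
    \<le> xsum (\<lambda>i. dissip (f i) (g i)) - eps * xsum (\<lambda>i. flux_gap f g i * ?J i)
      + eps * xsum (\<lambda>i. pressure_gap f g i * dens_gap f g i) - eps * xsum (\<lambda>i. relax_gap f g i * \<psi> i)"
    unfolding xsum_add xsum_diff xsum_cmult .
  have "eps / 2 * xsum (\<lambda>i. (?J i)\<^sup>2) \<le> eps / 2 * (G * xsum (micro_sum f g))"
    using xsum_sq_current_deviation_le eps_pos by (intro mult_left_mono) auto
  moreover have "eps / (16 * len\<^sup>2) * xsum (\<lambda>i. (\<psi> i)\<^sup>2)
      \<le> eps / (16 * len\<^sup>2) * (4 * len\<^sup>2 * xsum (\<lambda>i. (dens_gap f g i)\<^sup>2))"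
    using potential_sq_le[OF assms] eps_pos by (intro mult_left_mono) auto
  moreover have "eps / (16 * len\<^sup>2) * (4 * len\<^sup>2 * xsum (\<lambda>i. (dens_gap f g i)\<^sup>2))
      = eps / 4 * xsum (\<lambda>i. (dens_gap f g i)\<^sup>2)"
    using len_pos by (simp add: field_simps)
  moreover have "dissip_const rho / 2 * xsum (micro_sum f g) \<le> (c - eps / 2 * G) * xsum (micro_sum f g)"
    using eps_moment_const_le xsum_nonneg[OF micro_sum_nonneg]
    by (intro mult_right_mono) (simp_all add: c_def algebra_simps)
  ultimately show ?thesis
    using sum by (simp add: algebra_simps)
qed

lemma energy_le_micro_macro:
  "energy f g \<le> equiv_const rho * xsum (micro_sum f g) + xsum (\<lambda>i. (dens_gap f g i)\<^sup>2)
    + xsum (\<lambda>i. (relax_dens f g i)\<^sup>2)"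
  unfolding energy_eq_xsum xsum_cmult[symmetric] xsum_add[symmetric] by (intro xsum_mono cell_energy_le)

lemma mod_energy_nonneg:
  assumes "is_potential (dens_gap f g) \<psi>"
  shows "0 \<le> mod_energy eps f g \<psi>"
  using mod_energy_equiv(1)[OF assms less_imp_le[OF eps_pos] eps_le(2)] energy_nonneg[of f g] by linarith

lemma mod_inner_coercive:
  assumes "is_potential (dens_gap f g) \<psi>" and "mean N (dens_gap f g) = 0"
  shows "rate * mod_energy eps f g \<psi> \<le> mod_inner eps f g \<psi> (opB_f f g) (opB_g f g) (opB_potential f g \<psi>)"
proof -
  let ?M = "xsum (micro_sum f g)" and ?m = "xsum (\<lambda>i. (dens_gap f g i)\<^sup>2)"
    and ?s = "xsum (\<lambda>i. (relax_dens f g i)\<^sup>2)"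
  have "?M \<ge> 0" "?m \<ge> 0" "?s \<ge> 0"
    by (auto intro!: xsum_nonneg micro_sum_nonneg)
  have "rate * mod_energy eps f g \<psi> \<le> rate * (3 / 2 * energy f g)"
    using mod_energy_equiv(2)[OF assms(1) less_imp_le[OF eps_pos] eps_le(2)] rate_pos
    by (intro mult_left_mono) auto
  also have "\<dots> \<le> rate * (3 / 2 * (equiv_const rho * ?M + ?m + ?s))"
    using energy_le_micro_macro rate_pos by (intro mult_left_mono) auto
  also have "\<dots> = (rate * 3 / 2 * equiv_const rho) * ?M + (rate * 3 / 2) * ?m + (rate * 3 / 2) * ?s"
    by (simp add: algebra_simps)
  also have "\<dots> \<le> dissip_const rho / 2 * ?M + eps / 2 * ?m + 1 * ?s"
  proof (intro add_mono mult_right_mono)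
    show "rate * 3 / 2 * equiv_const rho \<le> dissip_const rho / 2"
      using rate_le(1) equiv_const_pos[OF rho_pos] by (simp add: le_divide_eq mult.commute)
    show "rate * 3 / 2 \<le> eps / 2" "rate * 3 / 2 \<le> 1"
      using rate_le(2) eps_le(1) by auto
  qed (use \<open>?M \<ge> 0\<close> \<open>?m \<ge> 0\<close> \<open>?s \<ge> 0\<close> in auto)
  also have "\<dots> \<le> xsum (\<lambda>i. dissip (f i) (g i))
      - eps * xsum (\<lambda>i. flux_gap f g i * (current_gap f g i - mean N (current_gap f g)))
      + eps * xsum (\<lambda>i. pressure_gap f g i * dens_gap f g i) - eps * xsum (\<lambda>i. relax_gap f g i * \<psi> i)"
    using dissipation_lower_bound[OF assms(1)] by (simp add: algebra_simps)
  also have "\<dots> \<le> mod_inner eps f g \<psi> (opB_f f g) (opB_g f g) (opB_potential f g \<psi>)"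
    using mod_inner_opB_eq[OF assms(1), of eps] assms(2)
      mod_energy_nonneg[OF is_potential_fdiff[OF assms(1), folded dens_gap_fdiff]] lam_pos dx_pos
    by simp
  finally show ?thesis .
qed

lemma dens_gap_step:
  assumes "\<And>j. j \<in> J \<Longrightarrow> f0 i j = f1 i j + dt * opB_f f1 g1 i j"
    and "\<And>j. j \<in> J \<Longrightarrow> g0 i j = g1 i j + dt * opB_g f1 g1 i j"
  shows "dens_gap f0 g0 i = dens_gap f1 g1 i + dt * dens_gap (opB_f f1 g1) (opB_g f1 g1) i"
proof -
  have "dens_gap f0 g0 i = dens_gap (\<lambda>i j. f1 i j + dt * opB_f f1 g1 i j) (\<lambda>i j. g1 i j + dt * opB_g f1 g1 i j) i"
    using assms by (intro dens_gap_cong) auto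
  then show ?thesis
    by (simp add: dens_gap_lin)
qed

lemma mod_energy_contraction:
  assumes f0: "\<And>i j. i < N \<Longrightarrow> j \<in> J \<Longrightarrow> f0 i j = f1 i j + dt * opB_f f1 g1 i j"
    and g0: "\<And>i j. i < N \<Longrightarrow> j \<in> J \<Longrightarrow> g0 i j = g1 i j + dt * opB_g f1 g1 i j"
    and "0 < dt" and \<psi>1: "is_potential (dens_gap f1 g1) \<psi>1" and "mean N (dens_gap f1 g1) = 0"
    and \<psi>0: "is_potential (dens_gap f0 g0) \<psi>0"
  shows "(1 + 2 * dt * rate) * mod_energy eps f1 g1 \<psi>1 \<le> mod_energy eps f0 g0 \<psi>0"
proof -
  let ?f = "opB_f f1 g1" and ?g = "opB_g f1 g1" and ?\<psi> = "opB_potential f1 g1 \<psi>1"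
  have "is_potential (\<lambda>i. dens_gap f1 g1 i + dt * dens_gap ?f ?g i) (\<lambda>i. \<psi>1 i + dt * ?\<psi> i)"
    by (rule is_potential_lin[OF \<psi>1 is_potential_opB[OF \<psi>1]])
  then have "is_potential (dens_gap f0 g0) (\<lambda>i. \<psi>1 i + dt * ?\<psi> i)"
    using f0 g0 by (subst is_potential_cong[OF dens_gap_step]) auto
  then have "\<psi>0 i = \<psi>1 i + dt * ?\<psi> i" if "i < N" for i
    using is_potential_unique[OF \<psi>0 _ that] by blast
  then have "mod_energy eps f0 g0 \<psi>0
      = mod_energy eps (\<lambda>i j. f1 i j + dt * ?f i j) (\<lambda>i j. g1 i j + dt * ?g i j) (\<lambda>i. \<psi>1 i + dt * ?\<psi> i)"
    using f0 g0 by (intro mod_energy_cong) auto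
  also have "\<dots> = mod_energy eps f1 g1 \<psi>1 + 2 * dt * mod_inner eps f1 g1 \<psi>1 ?f ?g ?\<psi>
      + dt\<^sup>2 * mod_energy eps ?f ?g ?\<psi>"
    by (rule mod_energy_quadratic)
  also have "\<dots> \<ge> mod_energy eps f1 g1 \<psi>1 + 2 * dt * (rate * mod_energy eps f1 g1 \<psi>1)"
    using mod_inner_coercive[OF \<psi>1 assms(5)] mod_energy_nonneg[OF is_potential_opB[OF \<psi>1]] \<open>0 < dt\<close>
    by (simp add: add_increasing2)
  finally show ?thesis
    by (simp add: algebra_simps)
qed

lemma mean_dens_gap_conserved:
  assumes scheme: "scheme N L dx dv dt lam rho chi1 chi2 f g" and "0 < dt"
    and mass: "(\<Sum>i<N. \<Sum>j\<in>J. dx * dv * (f 0 i j - g 0 i j)) = 0"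
  shows "mean N (dens_gap (f n) (g n)) = 0"
proof (induction n)
  case 0
  have "(\<Sum>j\<in>J. dx * dv * (f 0 i j - g 0 i j)) = dx * dens_gap (f 0) (g 0) i" for i
    by (simp add: dens_gap_def mom0_eq sum_subtractf sum_distrib_left right_diff_distrib mult.assoc)
  then have "(\<Sum>i<N. \<Sum>j\<in>J. dx * dv * (f 0 i j - g 0 i j)) = dx * (\<Sum>i<N. dens_gap (f 0) (g 0) i)"
    by (simp add: sum_distrib_left)
  then show ?case
    using mass dx_pos by (simp add: mean_def)
next
  case (Suc n)
  have "mean N (dens_gap (f n) (g n))
      = mean N (\<lambda>i. dens_gap (f (Suc n)) (g (Suc n)) i
          + dt * dens_gap (opB_f (f (Suc n)) (g (Suc n))) (opB_g (f (Suc n)) (g (Suc n))) i)"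
    using scheme_step[OF scheme \<open>0 < dt\<close>, where n = n] by (intro mean_cong dens_gap_step) auto
  then show ?case
    using Suc.IH by (simp add: mean_lin mean_dens_gap_opB)
qed

lemma energy_decay:
  assumes scheme: "scheme N L dx dv dt lam rho chi1 chi2 f g" and "0 < dt"
    and mass: "(\<Sum>i<N. \<Sum>j\<in>J. dx * dv * (f 0 i j - g 0 i j)) = 0"
  shows "energy (f n) (g n) \<le> 3 * (1 / (1 + 2 * dt * rate)) ^ n * energy (f 0) (g 0)"
proof -
  define H where "H n = mod_energy eps (f n) (g n) (potential (dens_gap (f n) (g n)))" for n
  define r where "r = 1 / (1 + 2 * dt * rate)"
  have "0 < 1 + 2 * dt * rate"
    using \<open>0 < dt\<close> rate_pos by (simp add: add_pos_pos)
  have "(1 + 2 * dt * rate) * H (Suc n) \<le> H n" for n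
    unfolding H_def using scheme_step[OF scheme \<open>0 < dt\<close>, where n = n]
    by (intro mod_energy_contraction is_potential_potential mean_dens_gap_conserved[OF scheme \<open>0 < dt\<close> mass]
        \<open>0 < dt\<close>) auto
  then have step: "H (Suc n) \<le> r * H n" for n
    using \<open>0 < 1 + 2 * dt * rate\<close> by (simp add: r_def field_simps)
  have "0 \<le> r"
    using \<open>0 < 1 + 2 * dt * rate\<close> by (simp add: r_def)
  have "H n \<le> r ^ n * H 0"
  proof (induction n)
    case (Suc n)
    have "H (Suc n) \<le> r * H n"
      by (rule step)
    also have "\<dots> \<le> r * (r ^ n * H 0)"
      using Suc.IH \<open>0 \<le> r\<close> by (rule mult_left_mono)
    finally show ?case
      by (simp add: mult.assoc)
  qed simp
  have "energy (f n) (g n) \<le> 2 * H n"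
    using mod_energy_equiv(1)[OF is_potential_potential less_imp_le[OF eps_pos] eps_le(2), of "f n" "g n"]
    unfolding H_def by linarith
  also have "\<dots> \<le> 2 * (r ^ n * H 0)"
    using \<open>H n \<le> r ^ n * H 0\<close> by simp
  also have "\<dots> \<le> 2 * (r ^ n * (3 / 2 * energy (f 0) (g 0)))"
    using mod_energy_equiv(2)[OF is_potential_potential less_imp_le[OF eps_pos] eps_le(2), of "f 0" "g 0"]
      \<open>0 \<le> r\<close> unfolding H_def by (intro mult_left_mono) auto
  finally show ?thesis
    by (simp add: r_def mult_ac)
qed

lemma normD_decay:
  assumes scheme: "scheme N L dx dv dt lam rho chi1 chi2 f g" and dt: "0 < dt" "dt \<le> dtmax"
    and mass: "(\<Sum>i<N. \<Sum>j\<in>J. dx * dv * (f 0 i j - g 0 i j)) = 0"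
  shows "normD N L dx dv rho chi1 chi2 (f (Suc n)) (g (Suc n))
    \<le> 2 * normD N L dx dv rho chi1 chi2 (f 0) (g 0) * exp (- (rate / (1 + 2 * dtmax * rate)) * (real n * dt))"
proof -
  define r where "r = 1 / (1 + 2 * dt * rate)"
  define q where "q = exp (- (rate / (1 + 2 * dtmax * rate)) * (real n * dt))"
  have "0 \<le> r" "r \<le> 1"
    using dt rate_pos by (auto simp: r_def add_pos_pos)
  have "r ^ Suc n \<le> r ^ n"
    using \<open>0 \<le> r\<close> \<open>r \<le> 1\<close> by (simp add: mult_left_le_one_le)
  also have "\<dots> \<le> exp (- (2 * (rate / (1 + 2 * dtmax * rate)) * dt)) ^ n"
    unfolding r_def using inverse_le_exp[OF rate_pos dt] \<open>0 \<le> r\<close>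
    by (intro power_mono) (auto simp: r_def)
  also have "\<dots> = q\<^sup>2"
    by (simp add: q_def power2_eq_square flip: exp_of_nat_mult exp_add)
  finally have "r ^ Suc n \<le> q\<^sup>2" .
  have "energy (f (Suc n)) (g (Suc n)) \<le> 3 * r ^ Suc n * energy (f 0) (g 0)"
    using energy_decay[OF scheme dt(1) mass, of "Suc n"] by (simp add: r_def)
  also have "\<dots> \<le> 3 * q\<^sup>2 * energy (f 0) (g 0)"
    using \<open>r ^ Suc n \<le> q\<^sup>2\<close> energy_nonneg[of "f 0" "g 0"] by (intro mult_right_mono) auto
  also have "\<dots> \<le> (2 * q)\<^sup>2 * energy (f 0) (g 0)"
    using energy_nonneg[of "f 0" "g 0"] by (intro mult_right_mono) (auto simp: power_mult_distrib)
  finally have "energy (f (Suc n)) (g (Suc n)) \<le> (2 * q)\<^sup>2 * energy (f 0) (g 0)" .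
  then have "sqrt (energy (f (Suc n)) (g (Suc n))) \<le> sqrt ((2 * q)\<^sup>2 * energy (f 0) (g 0))"
    by (rule real_sqrt_le_mono)
  also have "\<dots> = 2 * q * sqrt (energy (f 0) (g 0))"
    by (simp add: real_sqrt_mult q_def)
  finally show ?thesis
    unfolding normD_eq q_def by (simp add: mult_ac)
qed

end

theorem theorem4p5:
  fixes len vstar lam rho dtmax Dlo1 Dhi1 Q1 Dlo2 Dhi2 Q2 :: real
  assumes "len > 0" and "vstar > 0" and "lam > 0" and "rho > 0" and "dtmax > 0"
    and "Dlo1 > 0" and "Dlo2 > 0"
  shows "\<exists>C \<kappa>. C \<ge> 1 \<and> \<kappa> > 0 \<and>
    (\<forall>(N::nat) (L::nat) dx dv dt chi1 chi2 f g.
       odd N \<longrightarrow> L \<ge> 1 \<longrightarrow>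
       dx = len / real N \<longrightarrow> dv = vstar / real L \<longrightarrow>
       dt > 0 \<longrightarrow> dt \<le> dtmax \<longrightarrow> lam = dx / (2 * dt) \<longrightarrow>
       chi_ok L dv Dlo1 Dhi1 Q1 chi1 \<longrightarrow> chi_ok L dv Dlo2 Dhi2 Q2 chi2 \<longrightarrow>
       (\<Sum>i<N. \<Sum>j\<in>Jset L. dx * dv * (f 0 i j - g 0 i j)) = 0 \<longrightarrow>
       scheme N L dx dv dt lam rho chi1 chi2 f g \<longrightarrow>
       (\<forall>n::nat. normD N L dx dv rho chi1 chi2 (f (Suc n)) (g (Suc n))
           \<le> C * normD N L dx dv rho chi1 chi2 (f 0) (g 0) * exp (- \<kappa> * (real n * dt))))"
proof -
  define k where "k = hypo_rate rho len vstar (min Dlo1 Dlo2)"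
  have "0 < k"
    unfolding k_def using assms by (intro hypo_rate_pos) auto
  then have "0 < k / (1 + 2 * dtmax * k)"
    using assms(5) by (simp add: add_pos_pos)
  moreover have "normD N L dx dv rho chi1 chi2 (f (Suc n)) (g (Suc n))
      \<le> 2 * normD N L dx dv rho chi1 chi2 (f 0) (g 0) * exp (- (k / (1 + 2 * dtmax * k)) * (real n * dt))"
    if "odd N" "L \<ge> 1" "dx = len / real N" "dv = vstar / real L" "0 < dt" "dt \<le> dtmax"
      "chi_ok L dv Dlo1 Dhi1 Q1 chi1" "chi_ok L dv Dlo2 Dhi2 Q2 chi2"
      "(\<Sum>i<N. \<Sum>j\<in>Jset L. dx * dv * (f 0 i j - g 0 i j)) = 0"
      "scheme N L dx dv dt lam rho chi1 chi2 f g"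
    for N L dx dv dt chi1 chi2 f g n
  proof -
    interpret lf_scheme L vstar dv N dx lam rho len chi1 Dlo1 Dhi1 Q1 chi2 Dlo2 Dhi2 Q2
      using assms that by unfold_locales auto
    show ?thesis
      unfolding k_def using normD_decay that(5,6,9,10) by blast
  qed
  ultimately show ?thesis
    by (intro exI[of _ 2] exI[of _ "k / (1 + 2 * dtmax * k)"]) auto
qed

end
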